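(* Fix $\lambda\in\Lambda$. Let $\mathcal R_\lambda\subset W_{\mathrm{aff}}$ be the set of affine reflections $$\mathcal R_\lambda=\bigcup_{\alpha\in\Phi^+}\begin{cases}\{s_{\alpha,k}: 0\ge k>-(\lambda,\alpha^\vee)\}&\text{if }(\lambda,\alpha^\vee)>0,\\ \{s_{\alpha,k}:0<k\le-(\lambda,\alpha^\vee)\}&\text{if }(\lambda,\alpha^\vee)<0,\\ \emptyset&\text{if }(\lambda,\alpha^\vee)=0,\end{cases}$$ and let $h:\mathcal R_\lambda\to\mathbb R^{r+1}$ be $h(s_{\alpha,k})=(\lambda,\alpha^\vee)^{-1}\big(-k,(\omega_1,\alpha^\vee),\dots,(\omega_r,\alpha^\vee)\big)$ for $\alpha\in\Phi^+$. Then $h$ is injective; and if $\mathcal R_\lambda=\{r_1,\dots,r_l\}$ is ordered so that $h(r_1)<\dots<h(r_l)$ lexicographically, then $(r_1,\dots,r_l)$ is the $\lambda$-chain of reflections and $(b(r_1),\dots,b(r_l))$ is the $\lambda$-chain of roots associated with some reduced decomposition of $v_{-\lambda}$, where $b(s_{\alpha,k})=\alpha$ if $k\le0$ and $b(s_{\alpha,k})=-\alpha$ if $k>0$ (for $\alpha\in\Phi^+$).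
   Context: $\Phi$ is an irreducible root system with positive roots $\Phi^+$, simple roots $\alpha_1,\dots,\alpha_r$, coroots $\alpha^\vee=2\alpha/(\alpha,\alpha)$, fundamental weights $\omega_i$ ($(\omega_i,\alpha_j^\vee)=\delta_{ij}$), weight lattice $\Lambda$, Weyl group $W$. For $\alpha\in\Phi,k\in\mathbb Z$: $s_{\alpha,k}(\lambda)=\lambda-((\lambda,\alpha^\vee)-k)\alpha$ (note $s_{\alpha,k}=s_{-\alpha,-k}$). $W_{\mathrm{aff}}$ is generated by $s_0=s_{\alpha_0,-1}$ ($\alpha_0=-\theta$, $\theta^\vee$ the highest coroot) and $s_i=s_{\alpha_i,0}$; $\bar v\in W$ is the linear part of $v$. $A_\circ=\{\lambda:0<(\lambda,\alpha^\vee)<1\ \forall\alpha\in\Phi^+\}$; $v_{-\lambda}$ is the unique element of $W_{\mathrm{aff}}$ with $v_{-\lambda}(A_\circ)=A_\circ-\lambda$. For a decomposition $v_{-\lambda}=s_{i_1}\cdots s_{i_l}$: the $\lambda$-chain of roots is $\beta_j=\bar s_{i_1}\cdots\bar s_{i_{j-1}}(\alpha_{i_j})$ and the $\lambda$-chain of reflections is $r_j=s_{i_1}\cdots s_{i_{j-1}}s_{i_j}s_{i_{j-1}}\cdots s_{i_1}$. *)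

theory Defs
  imports "HOL-Analysis.Analysis"
begin

definition coroot :: "'a::real_inner \<Rightarrow> 'a" where
  "coroot \<alpha> = (2 / (\<alpha> \<bullet> \<alpha>)) *\<^sub>R \<alpha>"

definition pairing :: "'a::real_inner \<Rightarrow> 'a \<Rightarrow> real" where
  "pairing lam \<alpha> = lam \<bullet> coroot \<alpha>"

definition saff :: "'a::real_inner \<Rightarrow> real \<Rightarrow> 'a \<Rightarrow> 'a" where
  "saff \<alpha> k = (\<lambda>lam. lam - (pairing lam \<alpha> - k) *\<^sub>R \<alpha>)"

definition root_system :: "'a::euclidean_space set \<Rightarrow> bool" where
  "root_system \<Phi> \<longleftrightarrow> finite \<Phi> \<and> 0 \<notin> \<Phi> \<and> span \<Phi> = UNIV \<and>
     (\<forall>\<alpha>\<in>\<Phi>. \<forall>\<beta>\<in>\<Phi>. saff \<alpha> 0 \<beta> \<in> \<Phi>) \<and>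
     (\<forall>\<alpha>\<in>\<Phi>. \<forall>\<beta>\<in>\<Phi>. pairing \<beta> \<alpha> \<in> \<int>) \<and>
     (\<forall>\<alpha>\<in>\<Phi>. \<forall>c::real. c *\<^sub>R \<alpha> \<in> \<Phi> \<longrightarrow> c = 1 \<or> c = -1)"

definition irreducible_rs :: "'a::euclidean_space set \<Rightarrow> bool" where
  "irreducible_rs \<Phi> \<longleftrightarrow> \<Phi> \<noteq> {} \<and>
     \<not> (\<exists>\<Phi>1 \<Phi>2. \<Phi>1 \<noteq> {} \<and> \<Phi>2 \<noteq> {} \<and> \<Phi>1 \<union> \<Phi>2 = \<Phi> \<and>
            (\<forall>\<alpha>\<in>\<Phi>1. \<forall>\<beta>\<in>\<Phi>2. \<alpha> \<bullet> \<beta> = 0))"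

definition is_base :: "'a::euclidean_space set \<Rightarrow> (nat \<Rightarrow> 'a) \<Rightarrow> nat \<Rightarrow> bool" where
  "is_base \<Phi> \<alpha> r \<longleftrightarrow> (\<forall>i\<in>{1..r}. \<alpha> i \<in> \<Phi>) \<and> inj_on \<alpha> {1..r} \<and>
     independent (\<alpha> ` {1..r}) \<and>
     (\<forall>\<beta>\<in>\<Phi>. \<exists>c::nat \<Rightarrow> int. \<beta> = (\<Sum>i=1..r. of_int (c i) *\<^sub>R \<alpha> i) \<and>
        ((\<forall>i\<in>{1..r}. c i \<ge> 0) \<or> (\<forall>i\<in>{1..r}. c i \<le> 0)))"

definition pos_roots :: "'a::euclidean_space set \<Rightarrow> (nat \<Rightarrow> 'a) \<Rightarrow> nat \<Rightarrow> 'a set" where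
  "pos_roots \<Phi> \<alpha> r = {\<beta>\<in>\<Phi>. \<exists>c::nat \<Rightarrow> real. (\<forall>i\<in>{1..r}. c i \<ge> 0) \<and>
                                 \<beta> = (\<Sum>i=1..r. c i *\<^sub>R \<alpha> i)}"

definition highest_coroot_root :: "'a::euclidean_space set \<Rightarrow> (nat \<Rightarrow> 'a) \<Rightarrow> nat \<Rightarrow> 'a \<Rightarrow> bool" where
  "highest_coroot_root \<Phi> \<alpha> r \<theta> \<longleftrightarrow> \<theta> \<in> pos_roots \<Phi> \<alpha> r \<and>
     (\<forall>\<beta>\<in>pos_roots \<Phi> \<alpha> r. \<exists>c::nat \<Rightarrow> real. (\<forall>i\<in>{1..r}. c i \<ge> 0) \<and>
        coroot \<theta> - coroot \<beta> = (\<Sum>i=1..r. c i *\<^sub>R coroot (\<alpha> i)))"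

definition weight_lattice :: "'a::euclidean_space set \<Rightarrow> 'a set" where
  "weight_lattice \<Phi> = {lam. \<forall>\<alpha>\<in>\<Phi>. pairing lam \<alpha> \<in> \<int>}"

definition root_idx :: "(nat \<Rightarrow> 'a::real_inner) \<Rightarrow> 'a \<Rightarrow> nat \<Rightarrow> 'a" where
  "root_idx \<alpha> \<theta> i = (if i = 0 then - \<theta> else \<alpha> i)"

definition sgen :: "(nat \<Rightarrow> 'a::real_inner) \<Rightarrow> 'a \<Rightarrow> nat \<Rightarrow> 'a \<Rightarrow> 'a" where
  "sgen \<alpha> \<theta> i = (if i = 0 then saff (- \<theta>) (-1) else saff (\<alpha> i) 0)"

definition sbar :: "(nat \<Rightarrow> 'a::real_inner) \<Rightarrow> 'a \<Rightarrow> nat \<Rightarrow> 'a \<Rightarrow> 'a" where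
  "sbar \<alpha> \<theta> i = saff (root_idx \<alpha> \<theta> i) 0"

definition wprod :: "(nat \<Rightarrow> 'a::real_inner) \<Rightarrow> 'a \<Rightarrow> nat list \<Rightarrow> 'a \<Rightarrow> 'a" where
  "wprod \<alpha> \<theta> w = foldr (\<circ>) (map (sgen \<alpha> \<theta>) w) id"

definition wbarprod :: "(nat \<Rightarrow> 'a::real_inner) \<Rightarrow> 'a \<Rightarrow> nat list \<Rightarrow> 'a \<Rightarrow> 'a" where
  "wbarprod \<alpha> \<theta> w = foldr (\<circ>) (map (sbar \<alpha> \<theta>) w) id"

definition W_aff :: "(nat \<Rightarrow> 'a::real_inner) \<Rightarrow> 'a \<Rightarrow> nat \<Rightarrow> ('a \<Rightarrow> 'a) set" where
  "W_aff \<alpha> \<theta> r = {wprod \<alpha> \<theta> w | w. set w \<subseteq> {0..r}}"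

definition fund_alcove :: "'a::euclidean_space set \<Rightarrow> (nat \<Rightarrow> 'a) \<Rightarrow> nat \<Rightarrow> 'a set" where
  "fund_alcove \<Phi> \<alpha> r = {lam. \<forall>\<beta>\<in>pos_roots \<Phi> \<alpha> r. 0 < pairing lam \<beta> \<and> pairing lam \<beta> < 1}"

definition v_minus :: "'a::euclidean_space set \<Rightarrow> (nat \<Rightarrow> 'a) \<Rightarrow> nat \<Rightarrow> 'a \<Rightarrow> 'a \<Rightarrow> 'a \<Rightarrow> 'a" where
  "v_minus \<Phi> \<alpha> r \<theta> lam = (THE v. v \<in> W_aff \<alpha> \<theta> r \<and>
      v ` fund_alcove \<Phi> \<alpha> r = (\<lambda>x. x - lam) ` fund_alcove \<Phi> \<alpha> r)"

definition reduced_decomp :: "(nat \<Rightarrow> 'a::real_inner) \<Rightarrow> 'a \<Rightarrow> nat \<Rightarrow> ('a \<Rightarrow> 'a) \<Rightarrow> nat list \<Rightarrow> bool" where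
  "reduced_decomp \<alpha> \<theta> r v w \<longleftrightarrow> set w \<subseteq> {0..r} \<and> wprod \<alpha> \<theta> w = v \<and>
     (\<forall>w'. set w' \<subseteq> {0..r} \<and> wprod \<alpha> \<theta> w' = v \<longrightarrow> length w \<le> length w')"

definition chain_refl :: "(nat \<Rightarrow> 'a::real_inner) \<Rightarrow> 'a \<Rightarrow> nat list \<Rightarrow> ('a \<Rightarrow> 'a) list" where
  "chain_refl \<alpha> \<theta> w = map (\<lambda>j. wprod \<alpha> \<theta> (take (Suc j) w @ rev (take j w))) [0..<length w]"

definition chain_roots :: "(nat \<Rightarrow> 'a::real_inner) \<Rightarrow> 'a \<Rightarrow> nat list \<Rightarrow> 'a list" where
  "chain_roots \<alpha> \<theta> w = map (\<lambda>j. wbarprod \<alpha> \<theta> (take j w) (root_idx \<alpha> \<theta> (w ! j))) [0..<length w]"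

text \<open>R_lambda, parametrised by pairs (alpha,k) with alpha positive: (alpha,k) stands for s_{alpha,k}.\<close>
definition R_pairs :: "'a::euclidean_space set \<Rightarrow> (nat \<Rightarrow> 'a) \<Rightarrow> nat \<Rightarrow> 'a \<Rightarrow> ('a \<times> int) set" where
  "R_pairs \<Phi> \<alpha> r lam = {(\<beta>, k). \<beta> \<in> pos_roots \<Phi> \<alpha> r \<and>
     ((pairing lam \<beta> > 0 \<and> 0 \<ge> k \<and> real_of_int k > - pairing lam \<beta>) \<or>
      (pairing lam \<beta> < 0 \<and> 0 < k \<and> real_of_int k \<le> - pairing lam \<beta>))}"

definition R_lambda :: "'a::euclidean_space set \<Rightarrow> (nat \<Rightarrow> 'a) \<Rightarrow> nat \<Rightarrow> 'a \<Rightarrow> ('a \<Rightarrow> 'a) set" where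
  "R_lambda \<Phi> \<alpha> r lam = (\<lambda>(\<beta>, k). saff \<beta> (of_int k)) ` R_pairs \<Phi> \<alpha> r lam"

text \<open>h(s_{alpha,k}) as a vector in R^(r+1), represented by a real list of length r+1.\<close>
definition hmap :: "(nat \<Rightarrow> 'a::real_inner) \<Rightarrow> nat \<Rightarrow> 'a \<Rightarrow> 'a \<times> int \<Rightarrow> real list" where
  "hmap \<omega> r lam p = (case p of (\<beta>, k) \<Rightarrow>
      map (\<lambda>x. x / pairing lam \<beta>) (- real_of_int k # map (\<lambda>i. pairing (\<omega> i) \<beta>) [1..<Suc r]))"

definition bmap :: "'a::real_inner \<times> int \<Rightarrow> 'a" where
  "bmap p = (case p of (\<beta>, k) \<Rightarrow> if k \<le> 0 then \<beta> else - \<beta>)"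

text \<open>Strict lexicographic order on real lists (used on lists of equal length r+1).\<close>
definition lex_less :: "real list \<Rightarrow> real list \<Rightarrow> bool" where
  "lex_less xs ys \<longleftrightarrow> (xs, ys) \<in> lexord {(x, y). x < y}"

end

theory Submission
  imports Defs
begin

text \<open>Walk along the segment from a point \<open>p\<close> of the fundamental alcove \<open>A\<close> to \<open>p - lam\<close>.
  It meets the wall \<open>{x. pairing x \<beta> = k}\<close> at time \<open>crossing_time p lam (\<beta>, k)\<close>, and the walls
  it meets are exactly those in \<open>R_pairs\<close>. For \<open>p = \<Sum>i. e ^ i *\<^sub>R \<omega> i\<close> with small \<open>e > 0\<close>
  the crossing times are polynomials in \<open>e\<close> with coefficients \<open>hmap\<close>, so the walls are crossed
  in the lexicographic order of \<open>hmap\<close>. Pulling the walk back into \<open>A\<close> after each crossing, the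
  next wall to be crossed is a wall of \<open>A\<close>, i.e. the mirror of a generator \<open>s\<^sub>i\<close>; recording these
  generators gives a word \<open>w\<close> whose prefixes conjugate its letters to the reflections and roots of
  the chain. The word maps \<open>A\<close> onto \<open>A - lam\<close>, so it represents \<open>v_minus \<Phi> \<alpha> r \<theta> lam\<close>
  because the stabiliser of \<open>A\<close> is trivial, and it is reduced because every word mapping \<open>A\<close>
  to \<open>A - lam\<close> crosses each of the walls in \<open>R_pairs\<close>, which separate the two alcoves.\<close>

section \<open>Affine reflections\<close>

lemma coroot_uminus [simp]: "coroot (- a) = - coroot a"
  by (simp add: coroot_def)

lemma coroot_coroot: "a \<noteq> 0 \<Longrightarrow> coroot (coroot a) = a"
  by (simp add: coroot_def field_simps)

lemma coroot_eq_0_iff: "coroot a = 0 \<longleftrightarrow> a = 0"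
  by (simp add: coroot_def)

lemma coroot_scaleR: "c \<noteq> 0 \<Longrightarrow> coroot (c *\<^sub>R a) = (1 / c) *\<^sub>R coroot a"
  by (simp add: coroot_def field_simps)

lemma pairing_add_left: "pairing (x + y) a = pairing x a + pairing y a"
  by (simp add: pairing_def inner_add_left)

lemma pairing_diff_left: "pairing (x - y) a = pairing x a - pairing y a"
  by (simp add: pairing_def inner_diff_left)

lemma pairing_scaleR_left: "pairing (c *\<^sub>R x) a = c * pairing x a"
  by (simp add: pairing_def)

lemma pairing_minus_left: "pairing (- x) a = - pairing x a"
  by (simp add: pairing_def)

lemma pairing_minus_right: "pairing x (- a) = - pairing x a"
  by (simp add: pairing_def)

lemma pairing_zero_left [simp]: "pairing 0 a = 0"
  by (simp add: pairing_def)

lemma pairing_self: "a \<noteq> 0 \<Longrightarrow> pairing a a = 2"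
  by (simp add: pairing_def coroot_def)

lemma pairing_eq_inner: "pairing x a = 2 * (x \<bullet> a) / (a \<bullet> a)"
  by (simp add: pairing_def coroot_def)

lemma saff_apply: "saff a k x = x - (pairing x a - k) *\<^sub>R a"
  by (simp add: saff_def)

lemma saff_minus: "saff (- a) (- k) = saff a k"
  by (rule ext) (simp add: saff_apply pairing_minus_right algebra_simps)

lemma pairing_saff_self: "a \<noteq> 0 \<Longrightarrow> pairing (saff a k x) a = 2 * k - pairing x a"
  by (simp add: saff_apply pairing_diff_left pairing_scaleR_left pairing_self)

lemma saff_saff: "a \<noteq> 0 \<Longrightarrow> saff a k (saff a k x) = x"
  by (simp add: saff_apply[of a k "saff a k x"] pairing_saff_self) (simp add: saff_apply algebra_simps)

lemma saff_fixpoint: "pairing x a = k \<Longrightarrow> saff a k x = x"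
  by (simp add: saff_apply)

lemma orthogonal_transformation_saff0:
  assumes "a \<noteq> 0"
  shows "orthogonal_transformation (saff a 0)"
proof -
  have "linear (saff a 0)"
    unfolding saff_def pairing_def by (auto intro!: linearI simp: inner_add_left algebra_simps)
  moreover have "saff a 0 x \<bullet> saff a 0 y = x \<bullet> y" for x y
    using assms unfolding saff_def pairing_def coroot_def
    by (simp add: inner_diff_left inner_diff_right inner_commute field_simps)
  ultimately show ?thesis by (simp add: orthogonal_transformation_def)
qed

lemma coroot_orthogonal_transformation:
  "orthogonal_transformation L \<Longrightarrow> coroot (L a) = L (coroot a)"
  by (simp add: orthogonal_transformation_def coroot_def linear_scale)

lemma pairing_orthogonal_transformation:
  "orthogonal_transformation L \<Longrightarrow> pairing (L x) (L a) = pairing x a"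
  by (simp add: coroot_orthogonal_transformation pairing_def orthogonal_transformation_def)

lemma pairing_saff0_swap: "a \<noteq> 0 \<Longrightarrow> pairing (saff a 0 x) b = pairing x (saff a 0 b)"
  using pairing_orthogonal_transformation[OF orthogonal_transformation_saff0, of a x "saff a 0 b"]
  by (simp add: saff_saff)

lemma saff_conjugate:
  assumes L: "orthogonal_transformation L" and g: "\<And>x. g x = L x + b"
  shows "g (saff a m x) = saff (L a) (m + pairing b (L a)) (g x)"
proof -
  have "g (saff a m x) = L x + b - (pairing x a - m) *\<^sub>R L a"
    using L by (simp add: g saff_apply orthogonal_transformation_def linear_diff linear_scale)
  also have "\<dots> = saff (L a) (m + pairing b (L a)) (g x)"
    using L by (simp add: g saff_apply pairing_add_left pairing_orthogonal_transformation)
  finally show ?thesis .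
qed

lemma of_int_less_between_iff:
  fixes v :: real
  assumes "of_int a < v" "v < of_int a + 1"
  shows "of_int m < v \<longleftrightarrow> m \<le> a"
proof
  assume "of_int m < v"
  then have "of_int m < (of_int (a + 1) :: real)" using assms(2) by simp
  then show "m \<le> a" by linarith
qed (use assms(1) in \<open>linarith\<close>)

lemma of_int_neq_between:
  fixes v :: real
  assumes "of_int a < v" "v < of_int a + 1"
  shows "v \<noteq> of_int m"
  using assms of_int_less_between_iff[OF assms, of m] of_int_less_between_iff[OF assms, of "m - 1"]
  by auto

lemma wprod_Nil [simp]: "wprod \<alpha> \<theta> [] = id"
  by (simp add: wprod_def)

lemma wprod_Cons: "wprod \<alpha> \<theta> (i # w) = sgen \<alpha> \<theta> i \<circ> wprod \<alpha> \<theta> w"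
  by (simp add: wprod_def)

lemma wprod_append: "wprod \<alpha> \<theta> (u @ v) = wprod \<alpha> \<theta> u \<circ> wprod \<alpha> \<theta> v"
  by (induction u) (simp_all add: wprod_Cons comp_assoc)

lemma wprod_snoc: "wprod \<alpha> \<theta> (w @ [i]) = wprod \<alpha> \<theta> w \<circ> sgen \<alpha> \<theta> i"
  by (simp add: wprod_append wprod_Cons)

lemma wprod_take_Suc:
  "j < length w \<Longrightarrow> wprod \<alpha> \<theta> (take (Suc j) w) = wprod \<alpha> \<theta> (take j w) \<circ> sgen \<alpha> \<theta> (w ! j)"
  by (simp add: take_Suc_conv_app_nth wprod_snoc)

lemma wbarprod_Nil [simp]: "wbarprod \<alpha> \<theta> [] = id"
  by (simp add: wbarprod_def)

lemma wbarprod_Cons: "wbarprod \<alpha> \<theta> (i # w) = sbar \<alpha> \<theta> i \<circ> wbarprod \<alpha> \<theta> w"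
  by (simp add: wbarprod_def)

section \<open>Affine functions of a real variable\<close>

lemma affine_attains_between:
  fixes C D K s t :: real
  assumes "(C + s * D \<le> K \<and> K \<le> C + t * D) \<or> (C + t * D \<le> K \<and> K \<le> C + s * D)"
  obtains x where "min s t \<le> x" "x \<le> max s t" "C + x * D = K"
proof -
  have cont: "continuous_on {min s t..max s t} (\<lambda>x. C + x * D)"
    by (intro continuous_intros)
  have "\<exists>x. min s t \<le> x \<and> x \<le> max s t \<and> C + x * D = K"
  proof (cases "s \<le> t")
    case True
    then show ?thesis
      using assms IVT'[of "\<lambda>x. C + x * D" s K t] IVT2'[of "\<lambda>x. C + x * D" t K s] cont by auto
  next
    case False
    then show ?thesis
      using assms IVT'[of "\<lambda>x. C + x * D" t K s] IVT2'[of "\<lambda>x. C + x * D" s K t] cont by auto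
  qed
  then show thesis
    using that by blast
qed

lemma affine_stays_in_unit_interval:
  fixes C D a b s0 s :: real
  assumes "a < s0" "s0 < b" and "0 < C + s0 * D" "C + s0 * D < 1"
    and avoid: "\<And>s. a < s \<Longrightarrow> s < b \<Longrightarrow> C + s * D \<noteq> 0 \<and> C + s * D \<noteq> 1"
    and "a < s" "s < b"
  shows "0 < C + s * D \<and> C + s * D < 1"
proof (rule ccontr)
  assume "\<not> ?thesis"
  then obtain K where K: "K = 0 \<or> K = 1"
    and between: "(C + s * D \<le> K \<and> K \<le> C + s0 * D) \<or> (C + s0 * D \<le> K \<and> K \<le> C + s * D)"
    using assms(3,4) by (metis linorder_not_less order.strict_implies_order)
  obtain x where x: "min s s0 \<le> x" "x \<le> max s s0" and "C + x * D = K"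
    using between by (rule affine_attains_between)
  moreover have "a < x" "x < b"
    using x assms(1,2,6,7) by (auto simp: min_le_iff_disj le_max_iff_disj)
  ultimately show False
    using avoid K by blast
qed

lemma affine_limit_in_unit_interval:
  fixes C D a b :: real
  assumes "a < b" and inside: "\<And>s. a < s \<Longrightarrow> s < b \<Longrightarrow> 0 < C + s * D \<and> C + s * D < 1"
  shows "0 \<le> C + b * D \<and> C + b * D \<le> 1"
proof -
  have "((\<lambda>s. C + s * D) \<longlongrightarrow> C + b * D) (at_left b)"
    by (intro tendsto_intros)
  moreover have "eventually (\<lambda>s. 0 \<le> C + s * D \<and> C + s * D \<le> 1) (at_left b)"
    using inside eventually_at_left_real[OF assms(1)] by (auto elim!: eventually_mono simp: less_imp_le)
  ultimately show ?thesis
    by (auto intro: tendsto_lowerbound tendsto_upperbound elim: eventually_mono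
        simp: trivial_limit_at_left_real)
qed

lemma affine_enters_unit_interval:
  fixes C D a b :: real
  assumes "a < b"
    and "(0 < C + a * D \<and> C + a * D < 1) \<or> (C + a * D = 0 \<and> D > 0) \<or> (C + a * D = 1 \<and> D < 0)"
  obtains s0 where "a < s0" "s0 < b" "0 < C + s0 * D" "C + s0 * D < 1"
proof -
  have lim: "((\<lambda>t. C + t * D) \<longlongrightarrow> C + a * D) (at_right a)"
    by (intro tendsto_intros)
  have after: "eventually (\<lambda>t. a < t) (at_right a)"
    by (rule eventually_at_right_less)
  have "eventually (\<lambda>t. 0 < C + t * D \<and> C + t * D < 1) (at_right a)"
    using assms(2)
  proof (elim disjE conjE)
    assume "0 < C + a * D" "C + a * D < 1"
    then show ?thesis
      using order_tendstoD[OF lim] by (auto intro: eventually_conj)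
  next
    assume "C + a * D = 0" "D > 0"
    have "0 < C + t * D" if "a < t" for t
      using that mult_strict_right_mono[OF that \<open>D > 0\<close>] \<open>C + a * D = 0\<close> by linarith
    then have "eventually (\<lambda>t. 0 < C + t * D) (at_right a)"
      using after by (auto elim: eventually_mono)
    moreover have "eventually (\<lambda>t. C + t * D < 1) (at_right a)"
      using order_tendstoD(2)[OF lim] \<open>C + a * D = 0\<close> by simp
    ultimately show ?thesis
      by (rule eventually_conj)
  next
    assume "C + a * D = 1" "D < 0"
    have "C + t * D < 1" if "a < t" for t
      using that mult_strict_right_mono_neg[OF that \<open>D < 0\<close>] \<open>C + a * D = 1\<close> by linarith
    then have "eventually (\<lambda>t. C + t * D < 1) (at_right a)"
      using after by (auto elim: eventually_mono)
    moreover have "eventually (\<lambda>t. 0 < C + t * D) (at_right a)"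
      using order_tendstoD(1)[OF lim] \<open>C + a * D = 1\<close> by simp
    ultimately show ?thesis
      by (auto intro: eventually_conj)
  qed
  moreover have "eventually (\<lambda>t. a < t \<and> t < b) (at_right a)"
    using eventually_at_right_real[OF assms(1)] by (auto elim: eventually_mono)
  ultimately obtain t where "a < t \<and> t < b" "0 < C + t * D \<and> C + t * D < 1"
    using eventually_happens'[of "at_right a"] eventually_conj by fastforce
  then show thesis
    using that by blast
qed

section \<open>Crossing times and polynomials given by coefficient lists\<close>

definition crossing_time :: "'a::real_inner \<Rightarrow> 'a \<Rightarrow> 'a \<times> int \<Rightarrow> real" where
  "crossing_time p lam h = (pairing p (fst h) - of_int (snd h)) / pairing lam (fst h)"

lemma pairing_crossing_time:
  "pairing lam \<beta> \<noteq> 0 \<Longrightarrow> pairing (p - crossing_time p lam (\<beta>, k) *\<^sub>R lam) \<beta> = of_int k"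
  by (simp add: crossing_time_def pairing_diff_left pairing_scaleR_left)

definition list_poly :: "real list \<Rightarrow> real \<Rightarrow> real" where
  "list_poly xs e = (\<Sum>i<length xs. xs ! i * e ^ i)"

lemma list_poly_Cons: "list_poly (a # xs) e = a + e * list_poly xs e"
proof -
  have "list_poly (a # xs) e = (\<Sum>i<Suc (length xs). (a # xs) ! i * e ^ i)"
    by (simp add: list_poly_def)
  also have "\<dots> = a + (\<Sum>i<length xs. (a # xs) ! Suc i * e ^ Suc i)"
    by (subst sum.lessThan_Suc_shift) simp
  also have "\<dots> = a + e * list_poly xs e"
    by (simp add: list_poly_def sum_distrib_left algebra_simps)
  finally show ?thesis .
qed

lemma list_poly_map_upt: "list_poly (map f [Suc 0..<Suc n]) e = (\<Sum>i<n. f (Suc i) * e ^ i)"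
  unfolding list_poly_def by (intro sum.cong) (simp_all del: upt_Suc add: nth_map)

lemma list_poly_lexord_eventually_less:
  "length xs = length ys \<Longrightarrow> (xs, ys) \<in> lexord {(x, y). x < y} \<Longrightarrow>
     eventually (\<lambda>e. list_poly xs e < list_poly ys e) (at_right 0)"
proof (induction xs arbitrary: ys)
  case Nil
  then show ?case
    by simp
next
  case (Cons a xs)
  then obtain b ys' where ys: "ys = b # ys'" and len: "length xs = length ys'"
    by (cases ys) auto
  have "a < b \<or> (a = b \<and> (xs, ys') \<in> lexord {(x, y). x < y})"
    using Cons.prems(2) ys by simp
  then show ?case
  proof
    assume "a < b"
    have "((\<lambda>e. (b + e * list_poly ys' e) - (a + e * list_poly xs e)) \<longlongrightarrow>
        (b + 0 * list_poly ys' 0) - (a + 0 * list_poly xs 0)) (at_right 0)"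
      unfolding list_poly_def by (intro tendsto_intros)
    then have "eventually (\<lambda>e. 0 < (b + e * list_poly ys' e) - (a + e * list_poly xs e)) (at_right 0)"
      by (rule order_tendstoD(1)) (use \<open>a < b\<close> in simp)
    then show ?thesis
      unfolding ys by (rule eventually_mono) (simp add: list_poly_Cons)
  next
    assume "a = b \<and> (xs, ys') \<in> lexord {(x, y). x < y}"
    then show ?thesis
      using eventually_conj[OF Cons.IH[OF len] eventually_at_right_less[of "0::real"]] unfolding ys
      by (auto elim!: eventually_mono simp: list_poly_Cons)
  qed
qed

section \<open>Roots, coroots and cocoordinates\<close>

locale based_root_system =
  fixes \<Phi> :: "'a::euclidean_space set" and \<alpha> \<omega> :: "nat \<Rightarrow> 'a" and r :: nat and \<theta> :: 'a
  assumes root_system: "root_system \<Phi>" and base: "is_base \<Phi> \<alpha> r"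
    and omega_dual: "\<forall>i\<in>{1..r}. \<forall>j\<in>{1..r}. pairing (\<omega> i) (\<alpha> j) = (if i = j then 1 else 0)"
    and theta_highest: "highest_coroot_root \<Phi> \<alpha> r \<theta>"
begin

abbreviation "P \<equiv> pos_roots \<Phi> \<alpha> r"
abbreviation "A \<equiv> fund_alcove \<Phi> \<alpha> r"

lemma finite_roots: "finite \<Phi>"
  using root_system by (simp add: root_system_def)

lemma root_nonzero: "\<beta> \<in> \<Phi> \<Longrightarrow> \<beta> \<noteq> 0"
  using root_system by (auto simp: root_system_def)

lemma roots_reflection_closed: "\<beta> \<in> \<Phi> \<Longrightarrow> \<gamma> \<in> \<Phi> \<Longrightarrow> saff \<beta> 0 \<gamma> \<in> \<Phi>"
  using root_system by (simp add: root_system_def)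

lemma pairing_roots_Ints: "\<beta> \<in> \<Phi> \<Longrightarrow> \<gamma> \<in> \<Phi> \<Longrightarrow> pairing \<gamma> \<beta> \<in> \<int>"
  using root_system by (simp add: root_system_def)

lemma roots_reduced: "\<beta> \<in> \<Phi> \<Longrightarrow> c *\<^sub>R \<beta> \<in> \<Phi> \<Longrightarrow> c = 1 \<or> c = -1"
  using root_system by (simp add: root_system_def)

lemma roots_uminus_closed: "\<beta> \<in> \<Phi> \<Longrightarrow> - \<beta> \<in> \<Phi>"
  using roots_reflection_closed[of \<beta> \<beta>] root_nonzero[of \<beta>]
  by (simp add: saff_apply pairing_self scaleR_2)

lemma simple_root_in_roots: "i \<in> {1..r} \<Longrightarrow> \<alpha> i \<in> \<Phi>"
  using base by (simp add: is_base_def)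

lemma simple_root_nonzero: "i \<in> {1..r} \<Longrightarrow> \<alpha> i \<noteq> 0"
  using root_nonzero simple_root_in_roots by blast

lemma pos_roots_subset: "P \<subseteq> \<Phi>"
  by (auto simp: pos_roots_def)

lemma span_simple_roots: "span (\<alpha> ` {1..r}) = UNIV"
proof -
  have "\<Phi> \<subseteq> span (\<alpha> ` {1..r})"
  proof
    fix \<beta> assume "\<beta> \<in> \<Phi>"
    then obtain c :: "nat \<Rightarrow> int" where "\<beta> = (\<Sum>i=1..r. of_int (c i) *\<^sub>R \<alpha> i)"
      using base by (auto simp: is_base_def)
    then show "\<beta> \<in> span (\<alpha> ` {1..r})"
      by (metis (no_types, lifting) imageI span_base span_scale span_sum)
  qed
  then have "span \<Phi> \<subseteq> span (\<alpha> ` {1..r})"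
    by (simp add: span_minimal)
  then show ?thesis
    using root_system by (auto simp: root_system_def)
qed

lemma expand_in_simple_roots: "\<exists>u. v = (\<Sum>i=1..r. u i *\<^sub>R \<alpha> i)"
proof -
  have inj: "inj_on \<alpha> {1..r}"
    using base by (simp add: is_base_def)
  obtain u where "v = (\<Sum>a\<in>\<alpha> ` {1..r}. u a *\<^sub>R a)"
    using span_simple_roots span_finite[of "\<alpha> ` {1..r}"] by auto
  also have "\<dots> = (\<Sum>i=1..r. u (\<alpha> i) *\<^sub>R \<alpha> i)"
    using sum.reindex[OF inj, of "\<lambda>a. u a *\<^sub>R a"] by (simp add: comp_def)
  finally show ?thesis by (rule exI[of _ "\<lambda>i. u (\<alpha> i)"])
qed

lemma omega_inner_simple_root:
  assumes "i \<in> {1..r}" "j \<in> {1..r}"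
  shows "\<omega> i \<bullet> \<alpha> j = (if i = j then (\<alpha> j \<bullet> \<alpha> j) / 2 else 0)"
proof -
  have "\<alpha> j = ((\<alpha> j \<bullet> \<alpha> j) / 2) *\<^sub>R coroot (\<alpha> j)"
    using simple_root_nonzero[OF assms(2)] by (simp add: coroot_def)
  then have "\<omega> i \<bullet> \<alpha> j = ((\<alpha> j \<bullet> \<alpha> j) / 2) * pairing (\<omega> i) (\<alpha> j)"
    by (metis inner_scaleR_right pairing_def)
  then show ?thesis
    using omega_dual assms by auto
qed

lemma omega_inner_sum_simple_roots:
  assumes j: "j \<in> {1..r}"
  shows "\<omega> j \<bullet> (\<Sum>i=1..r. c i *\<^sub>R \<alpha> i) = c j * ((\<alpha> j \<bullet> \<alpha> j) / 2)"
proof -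
  have "\<omega> j \<bullet> (\<Sum>i=1..r. c i *\<^sub>R \<alpha> i) = (\<Sum>i=1..r. if i = j then c j * ((\<alpha> j \<bullet> \<alpha> j) / 2) else 0)"
    unfolding inner_sum_right by (rule sum.cong) (auto simp: omega_inner_simple_root[OF j])
  then show ?thesis
    using j by simp
qed

lemma expand_in_simple_coroots: "v = (\<Sum>i=1..r. (\<omega> i \<bullet> v) *\<^sub>R coroot (\<alpha> i))"
proof -
  obtain u where u: "v = (\<Sum>i=1..r. u i *\<^sub>R \<alpha> i)"
    using expand_in_simple_roots by blast
  also have "\<dots> = (\<Sum>i=1..r. (u i * ((\<alpha> i \<bullet> \<alpha> i) / 2)) *\<^sub>R coroot (\<alpha> i))"
    by (rule sum.cong) (auto simp: coroot_def dest: simple_root_nonzero)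
  also have "\<dots> = (\<Sum>i=1..r. (\<omega> i \<bullet> v) *\<^sub>R coroot (\<alpha> i))"
    by (rule sum.cong) (use u omega_inner_sum_simple_roots in auto)
  finally show ?thesis .
qed

definition cocoord :: "'a \<Rightarrow> nat \<Rightarrow> real" where
  "cocoord \<beta> i = pairing (\<omega> i) \<beta>"

lemma coroot_expand_cocoord: "coroot \<beta> = (\<Sum>i=1..r. cocoord \<beta> i *\<^sub>R coroot (\<alpha> i))"
  using expand_in_simple_coroots[of "coroot \<beta>"] by (simp add: cocoord_def pairing_def)

lemma pairing_expand_cocoord: "pairing x \<beta> = (\<Sum>j=1..r. cocoord \<beta> j * pairing x (\<alpha> j))"
  by (subst pairing_def, subst coroot_expand_cocoord) (simp add: inner_sum_right pairing_def)

lemma cocoord_inject: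
  assumes "\<beta> \<noteq> 0" "\<gamma> \<noteq> 0" "\<forall>i\<in>{1..r}. cocoord \<beta> i = cocoord \<gamma> i"
  shows "\<beta> = \<gamma>"
proof -
  have "coroot \<beta> = coroot \<gamma>"
    using assms(3) by (simp add: coroot_expand_cocoord[of \<beta>] coroot_expand_cocoord[of \<gamma>])
  then show ?thesis
    using coroot_coroot assms(1,2) by metis
qed

lemma cocoord_nonzero:
  assumes "\<beta> \<noteq> 0"
  shows "\<exists>i\<in>{1..r}. cocoord \<beta> i \<noteq> 0"
proof (rule ccontr)
  assume "\<not> ?thesis"
  then have "coroot \<beta> = 0"
    by (subst coroot_expand_cocoord) (simp add: sum.neutral)
  then show False
    using assms by (simp add: coroot_eq_0_iff)
qed

lemma cocoord_uminus: "cocoord (- \<beta>) i = - cocoord \<beta> i"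
  by (simp add: cocoord_def pairing_minus_right)

lemma cocoord_simple_root: "i \<in> {1..r} \<Longrightarrow> j \<in> {1..r} \<Longrightarrow> cocoord (\<alpha> j) i = (if i = j then 1 else 0)"
  using omega_dual by (simp add: cocoord_def)

lemma cocoord_nonneg_iff:
  assumes "\<beta> \<noteq> 0" and "\<beta> = (\<Sum>i=1..r. c i *\<^sub>R \<alpha> i)" and "i \<in> {1..r}"
  shows "cocoord \<beta> i \<ge> 0 \<longleftrightarrow> c i \<ge> 0" and "cocoord \<beta> i \<le> 0 \<longleftrightarrow> c i \<le> 0"
proof -
  have "cocoord \<beta> i = 2 * (\<omega> i \<bullet> \<beta>) / (\<beta> \<bullet> \<beta>)"
    by (simp add: cocoord_def pairing_eq_inner)
  also have "\<dots> = (\<alpha> i \<bullet> \<alpha> i) / (\<beta> \<bullet> \<beta>) * c i"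
    using omega_inner_sum_simple_roots[OF assms(3), of c] assms(2) by (simp add: mult.commute)
  finally have "cocoord \<beta> i = (\<alpha> i \<bullet> \<alpha> i) / (\<beta> \<bullet> \<beta>) * c i" .
  moreover have "(\<alpha> i \<bullet> \<alpha> i) / (\<beta> \<bullet> \<beta>) > 0"
    using assms(1) simple_root_nonzero[OF assms(3)] by simp
  ultimately show "cocoord \<beta> i \<ge> 0 \<longleftrightarrow> c i \<ge> 0" and "cocoord \<beta> i \<le> 0 \<longleftrightarrow> c i \<le> 0"
    by (metis mult_le_cancel_left_pos mult_zero_right)+
qed

lemma root_cocoords_sign:
  assumes "\<beta> \<in> \<Phi>"
  shows "(\<forall>i\<in>{1..r}. cocoord \<beta> i \<ge> 0) \<or> (\<forall>i\<in>{1..r}. cocoord \<beta> i \<le> 0)"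
proof -
  obtain c :: "nat \<Rightarrow> int" where c: "\<beta> = (\<Sum>i=1..r. of_int (c i) *\<^sub>R \<alpha> i)"
    and "(\<forall>i\<in>{1..r}. c i \<ge> 0) \<or> (\<forall>i\<in>{1..r}. c i \<le> 0)"
    using assms base by (auto simp: is_base_def)
  then show ?thesis
    using cocoord_nonneg_iff[OF root_nonzero[OF assms] c] by auto
qed

lemma pos_root_iff: "\<beta> \<in> \<Phi> \<Longrightarrow> \<beta> \<in> P \<longleftrightarrow> (\<forall>i\<in>{1..r}. cocoord \<beta> i \<ge> 0)"
proof
  assume "\<beta> \<in> \<Phi>" and "\<beta> \<in> P"
  then obtain c where "\<forall>i\<in>{1..r}. c i \<ge> 0" and "\<beta> = (\<Sum>i=1..r. c i *\<^sub>R \<alpha> i)"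
    by (auto simp: pos_roots_def)
  then show "\<forall>i\<in>{1..r}. cocoord \<beta> i \<ge> 0"
    using cocoord_nonneg_iff root_nonzero[OF \<open>\<beta> \<in> \<Phi>\<close>] by blast
next
  assume \<beta>: "\<beta> \<in> \<Phi>" and nonneg: "\<forall>i\<in>{1..r}. cocoord \<beta> i \<ge> 0"
  obtain c where c: "\<beta> = (\<Sum>i=1..r. c i *\<^sub>R \<alpha> i)"
    using expand_in_simple_roots by blast
  then have "\<forall>i\<in>{1..r}. c i \<ge> 0"
    using nonneg cocoord_nonneg_iff root_nonzero[OF \<beta>] by blast
  then show "\<beta> \<in> P"
    using \<beta> c by (auto simp: pos_roots_def)
qed

lemma pos_root_or_uminus:
  assumes "\<beta> \<in> \<Phi>"
  shows "\<beta> \<in> P \<or> - \<beta> \<in> P"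
  using root_cocoords_sign[OF assms] pos_root_iff[OF assms] pos_root_iff[OF roots_uminus_closed[OF assms]]
  by (simp add: cocoord_uminus)

lemma pos_root_uminus_notin: "\<beta> \<in> P \<Longrightarrow> - \<beta> \<notin> P"
proof
  assume \<beta>: "\<beta> \<in> P" and "- \<beta> \<in> P"
  have "\<beta> \<in> \<Phi>"
    using \<beta> pos_roots_subset by auto
  then have "\<forall>i\<in>{1..r}. cocoord \<beta> i = 0"
    using \<beta> \<open>- \<beta> \<in> P\<close> pos_root_iff[OF \<open>\<beta> \<in> \<Phi>\<close>] pos_root_iff[OF roots_uminus_closed[OF \<open>\<beta> \<in> \<Phi>\<close>]]
    by (simp add: cocoord_uminus) (meson antisym neg_0_le_iff_le)
  then show False
    using cocoord_nonzero root_nonzero[OF \<open>\<beta> \<in> \<Phi>\<close>] by auto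
qed

lemma pos_roots_parallel_eq:
  assumes "\<beta> \<in> P" "\<gamma> \<in> P" "\<beta> = c *\<^sub>R \<gamma>"
  shows "\<beta> = \<gamma>"
proof -
  have "c = 1 \<or> c = -1"
    using roots_reduced[of \<gamma> c] assms pos_roots_subset by auto
  then show ?thesis
    using assms pos_root_uminus_notin by auto
qed

lemma simple_root_pos: "i \<in> {1..r} \<Longrightarrow> \<alpha> i \<in> P"
  using pos_root_iff[OF simple_root_in_roots] cocoord_simple_root by auto

lemma highest_root_pos: "\<theta> \<in> P"
  using theta_highest by (simp add: highest_coroot_root_def)

lemma highest_root_in_roots: "\<theta> \<in> \<Phi>"
  using highest_root_pos pos_roots_subset by auto

lemma highest_root_nonzero: "\<theta> \<noteq> 0"
  using root_nonzero highest_root_in_roots by blast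

lemma cocoord_le_highest_root:
  assumes "\<beta> \<in> P" and i: "i \<in> {1..r}"
  shows "cocoord \<beta> i \<le> cocoord \<theta> i"
proof -
  obtain c where c0: "\<forall>i\<in>{1..r}. c i \<ge> 0"
    and c: "coroot \<theta> - coroot \<beta> = (\<Sum>j=1..r. c j *\<^sub>R coroot (\<alpha> j))"
    using theta_highest assms(1) by (auto simp: highest_coroot_root_def)
  have "cocoord \<theta> i - cocoord \<beta> i = \<omega> i \<bullet> (coroot \<theta> - coroot \<beta>)"
    by (simp add: cocoord_def pairing_def inner_diff_right)
  also have "\<dots> = (\<Sum>j=1..r. if j = i then c i else 0)"
    unfolding c inner_sum_right
    by (rule sum.cong) (use omega_dual i in \<open>auto simp: pairing_def\<close>)
  also have "\<dots> = c i"
    using i by simp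
  finally show ?thesis
    using c0 i by (metis atLeastAtMost_iff diff_ge_0_iff_ge)
qed

lemma cocoord_saff0:
  assumes "\<gamma> \<noteq> 0"
  shows "cocoord (saff \<gamma> 0 \<beta>) j = cocoord \<beta> j - pairing \<gamma> \<beta> * cocoord \<gamma> j"
proof -
  have "coroot (saff \<gamma> 0 \<beta>) = coroot \<beta> - pairing (coroot \<beta>) \<gamma> *\<^sub>R \<gamma>"
    using coroot_orthogonal_transformation[OF orthogonal_transformation_saff0[OF assms]]
    by (simp add: saff_apply)
  moreover have "pairing (coroot \<beta>) \<gamma> * (\<omega> j \<bullet> \<gamma>) = pairing \<gamma> \<beta> * cocoord \<gamma> j"
    using assms by (cases "\<beta> = 0") (simp_all add: cocoord_def pairing_eq_inner coroot_def inner_commute)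
  ultimately show ?thesis
    by (simp add: cocoord_def pairing_def[of "\<omega> j"] inner_diff_right)
qed

lemma simple_reflection_pos_root:
  assumes i: "i \<in> {1..r}" and \<beta>: "\<beta> \<in> P" and ne: "\<beta> \<noteq> \<alpha> i"
  shows "saff (\<alpha> i) 0 \<beta> \<in> P"
proof -
  have \<beta>\<Phi>: "\<beta> \<in> \<Phi>"
    using \<beta> pos_roots_subset by auto
  have nonneg: "\<forall>j\<in>{1..r}. cocoord \<beta> j \<ge> 0"
    using pos_root_iff[OF \<beta>\<Phi>] \<beta> by blast
  have "\<exists>j\<in>{1..r}. j \<noteq> i \<and> cocoord \<beta> j > 0"
  proof (rule ccontr)
    assume "\<not> ?thesis"
    then have "cocoord \<beta> j = 0" if "j \<in> {1..r}" "j \<noteq> i" for j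
      using nonneg that by (metis order.not_eq_order_implies_strict)
    then have "coroot \<beta> = (\<Sum>j=1..r. if j = i then cocoord \<beta> i *\<^sub>R coroot (\<alpha> i) else 0)"
      unfolding coroot_expand_cocoord[of \<beta>] by (intro sum.cong) simp_all
    then have cr: "coroot \<beta> = cocoord \<beta> i *\<^sub>R coroot (\<alpha> i)"
      using i by simp
    then have c0: "cocoord \<beta> i \<noteq> 0"
      using root_nonzero[OF \<beta>\<Phi>] coroot_eq_0_iff by force
    have "\<beta> = coroot (cocoord \<beta> i *\<^sub>R coroot (\<alpha> i))"
      using cr coroot_coroot root_nonzero[OF \<beta>\<Phi>] by metis
    also have "\<dots> = (1 / cocoord \<beta> i) *\<^sub>R \<alpha> i"
      using coroot_scaleR[OF c0] coroot_coroot simple_root_nonzero[OF i] by metis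
    finally show False
      using pos_roots_parallel_eq \<beta> simple_root_pos[OF i] ne by blast
  qed
  then obtain j where j: "j \<in> {1..r}" "j \<noteq> i" "cocoord \<beta> j > 0"
    by blast
  have "cocoord (saff (\<alpha> i) 0 \<beta>) j > 0"
    using cocoord_saff0[OF simple_root_nonzero[OF i]] cocoord_simple_root[OF j(1) i] j by simp
  moreover have s\<Phi>: "saff (\<alpha> i) 0 \<beta> \<in> \<Phi>"
    using roots_reflection_closed simple_root_in_roots[OF i] \<beta>\<Phi> by blast
  ultimately have "\<forall>k\<in>{1..r}. cocoord (saff (\<alpha> i) 0 \<beta>) k \<ge> 0"
    using root_cocoords_sign[OF s\<Phi>] j(1) by force
  then show ?thesis
    using pos_root_iff[OF s\<Phi>] by blast
qed

lemma pos_root_cocoord_nonneg: "\<beta> \<in> P \<Longrightarrow> j \<in> {1..r} \<Longrightarrow> 0 \<le> cocoord \<beta> j"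
  using pos_root_iff pos_roots_subset by blast

text \<open>Reflecting \<open>\<beta>\<close> in \<open>\<theta>\<close> subtracts \<open>n = pairing \<theta> \<beta>\<close> times the cocoordinates of \<open>\<theta>\<close>;
  for \<open>n \<le> -1\<close> or \<open>n \<ge> 2\<close> this yields a positive root exceeding \<open>\<theta>\<close>.\<close>
lemma pairing_highest_root_gt:
  assumes \<beta>: "\<beta> \<in> P"
  shows "-1 < pairing \<theta> \<beta>"
proof (rule ccontr)
  assume "\<not> -1 < pairing \<theta> \<beta>"
  then have n: "pairing \<theta> \<beta> \<le> -1"
    by simp
  let ?\<delta> = "saff \<theta> 0 \<beta>"
  have ge: "cocoord ?\<delta> j \<ge> cocoord \<beta> j + cocoord \<theta> j" if "j \<in> {1..r}" for j
    using mult_right_mono[OF n pos_root_cocoord_nonneg[OF highest_root_pos that]]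
      cocoord_saff0[OF highest_root_nonzero, of \<beta> j] by simp
  have "?\<delta> \<in> \<Phi>"
    using roots_reflection_closed[OF highest_root_in_roots] \<beta> pos_roots_subset by blast
  moreover have "\<forall>j\<in>{1..r}. cocoord ?\<delta> j \<ge> 0"
    using ge pos_root_cocoord_nonneg[OF \<beta>] pos_root_cocoord_nonneg[OF highest_root_pos]
    by (metis add_nonneg_nonneg order.trans)
  ultimately have "?\<delta> \<in> P"
    using pos_root_iff by blast
  then have "cocoord \<beta> j = 0" if "j \<in> {1..r}" for j
    using cocoord_le_highest_root[OF _ that] ge[OF that] pos_root_cocoord_nonneg[OF \<beta> that]
    by (metis add_le_same_cancel2 order.antisym order.trans)
  then show False
    using cocoord_nonzero root_nonzero \<beta> pos_roots_subset by blast
qed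

lemma pairing_highest_root_less:
  assumes \<beta>: "\<beta> \<in> P" and ne: "\<beta> \<noteq> \<theta>"
  shows "pairing \<theta> \<beta> < 2"
proof (rule ccontr)
  assume "\<not> pairing \<theta> \<beta> < 2"
  then have n: "2 \<le> pairing \<theta> \<beta>"
    by simp
  let ?\<delta> = "- saff \<theta> 0 \<beta>"
  have le: "cocoord \<beta> j \<le> cocoord \<theta> j" if "j \<in> {1..r}" for j
    using cocoord_le_highest_root[OF \<beta> that] .
  have ge: "cocoord ?\<delta> j \<ge> 2 * cocoord \<theta> j - cocoord \<beta> j" if "j \<in> {1..r}" for j
    using mult_right_mono[OF n pos_root_cocoord_nonneg[OF highest_root_pos that]]
      cocoord_saff0[OF highest_root_nonzero, of \<beta> j] by (simp add: cocoord_uminus)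
  have "?\<delta> \<in> \<Phi>"
    using roots_uminus_closed roots_reflection_closed[OF highest_root_in_roots] \<beta> pos_roots_subset
    by blast
  moreover have "\<forall>j\<in>{1..r}. cocoord ?\<delta> j \<ge> 0"
    using ge le pos_root_cocoord_nonneg[OF highest_root_pos]
    by (metis diff_ge_0_iff_ge mult_2 order.trans add_increasing2)
  ultimately have "?\<delta> \<in> P"
    using pos_root_iff by blast
  then have "cocoord \<beta> j = cocoord \<theta> j" if "j \<in> {1..r}" for j
    using cocoord_le_highest_root[OF _ that, of ?\<delta>] ge[OF that] le[OF that] by linarith
  then show False
    using cocoord_inject root_nonzero highest_root_nonzero ne \<beta> pos_roots_subset by blast
qed

lemma pairing_highest_root_01:
  assumes "\<beta> \<in> P" "\<beta> \<noteq> \<theta>"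
  shows "pairing \<theta> \<beta> = 0 \<or> pairing \<theta> \<beta> = 1"
proof -
  obtain m :: int where "pairing \<theta> \<beta> = of_int m"
    using pairing_roots_Ints[OF _ highest_root_in_roots] assms(1) pos_roots_subset
    by (metis Ints_cases subsetD)
  then show ?thesis
    using pairing_highest_root_gt[OF assms(1)] pairing_highest_root_less[OF assms] by auto
qed

section \<open>Walls of the fundamental alcove\<close>

definition wall_root :: "nat \<Rightarrow> 'a" where
  "wall_root i = (if i = 0 then \<theta> else \<alpha> i)"

definition wall_const :: "nat \<Rightarrow> int" where
  "wall_const i = (if i = 0 then 1 else 0)"

lemma sgen_eq_wall_reflection: "sgen \<alpha> \<theta> i = saff (wall_root i) (of_int (wall_const i))"
  using saff_minus[of \<theta> 1] by (simp add: sgen_def wall_root_def wall_const_def)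

lemma wall_root_pos: "i \<in> {0..r} \<Longrightarrow> wall_root i \<in> P"
  by (auto simp: wall_root_def highest_root_pos simple_root_pos)

lemma wall_root_nonzero: "i \<in> {0..r} \<Longrightarrow> wall_root i \<noteq> 0"
  using wall_root_pos pos_roots_subset root_nonzero by blast

lemma sgen_sgen: "i \<in> {0..r} \<Longrightarrow> sgen \<alpha> \<theta> i (sgen \<alpha> \<theta> i x) = x"
  by (simp add: sgen_eq_wall_reflection saff_saff wall_root_nonzero)

lemma alcove_pairing: "x \<in> A \<Longrightarrow> \<beta> \<in> P \<Longrightarrow> 0 < pairing x \<beta> \<and> pairing x \<beta> < 1"
  by (simp add: fund_alcove_def)

lemma alcove_less_pairing_iff:
  assumes "x \<in> A" "\<gamma> \<in> \<Phi>"
  shows "of_int m < pairing x \<gamma> \<longleftrightarrow> (if \<gamma> \<in> P then m \<le> 0 else m \<le> -1)"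
proof (cases "\<gamma> \<in> P")
  case True
  then show ?thesis
    using of_int_less_between_iff[of 0 "pairing x \<gamma>" m] alcove_pairing[OF assms(1)] by simp
next
  case False
  then have "- \<gamma> \<in> P"
    using pos_root_or_uminus[OF assms(2)] by blast
  then have "of_int (-1) < pairing x \<gamma> \<and> pairing x \<gamma> < of_int (-1) + 1"
    using alcove_pairing[OF assms(1)] by (fastforce simp: pairing_minus_right)
  then show ?thesis
    using of_int_less_between_iff[of "-1" "pairing x \<gamma>" m] False by simp
qed

lemma alcove_pairing_notin_Ints:
  assumes "x \<in> A" "\<gamma> \<in> \<Phi>"
  shows "pairing x \<gamma> \<noteq> of_int m"
proof (cases "\<gamma> \<in> P")
  case True
  then show ?thesis
    using of_int_neq_between[of 0] alcove_pairing[OF assms(1)] by simp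
next
  case False
  then have "0 < pairing x (- \<gamma>) \<and> pairing x (- \<gamma>) < 1"
    using pos_root_or_uminus[OF assms(2)] alcove_pairing[OF assms(1)] by blast
  then show ?thesis
    using of_int_neq_between[of "-1" "pairing x \<gamma>" m] by (simp add: pairing_minus_right)
qed

lemma generator_alcove_pairing_notin_Ints:
  assumes x: "x \<in> A" and i: "i \<in> {0..r}" and \<gamma>: "\<gamma> \<in> \<Phi>"
  shows "pairing (sgen \<alpha> \<theta> i x) \<gamma> \<noteq> of_int m"
proof -
  let ?\<beta> = "wall_root i"
  have \<beta>: "?\<beta> \<in> \<Phi>" "?\<beta> \<noteq> 0"
    using wall_root_pos[OF i] pos_roots_subset wall_root_nonzero[OF i] by auto
  obtain n :: int where n: "pairing ?\<beta> \<gamma> = of_int n"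
    using pairing_roots_Ints[OF \<gamma> \<beta>(1)] by (auto elim: Ints_cases)
  have "sgen \<alpha> \<theta> i x = saff ?\<beta> 0 x + of_int (wall_const i) *\<^sub>R ?\<beta>"
    by (simp add: sgen_eq_wall_reflection saff_apply algebra_simps)
  then have "pairing (sgen \<alpha> \<theta> i x) \<gamma> = pairing (saff ?\<beta> 0 x) \<gamma> + of_int (wall_const i * n)"
    using n by (simp add: pairing_add_left pairing_scaleR_left)
  also have "pairing (saff ?\<beta> 0 x) \<gamma> = pairing x (saff ?\<beta> 0 \<gamma>)"
    by (rule pairing_saff0_swap[OF \<beta>(2)])
  finally show ?thesis
    using alcove_pairing_notin_Ints[OF x roots_reflection_closed[OF \<beta>(1) \<gamma>], of "m - wall_const i * n"]
    by auto
qed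

lemma alcove_pairing_less_highest_root:
  assumes x: "x \<in> A" and \<beta>: "\<beta> \<in> P" and ne: "\<beta> \<noteq> \<theta>"
  shows "pairing x \<beta> < pairing x \<theta>"
proof -
  have "\<beta> \<in> \<Phi>"
    using \<beta> pos_roots_subset by auto
  then obtain j where j: "j \<in> {1..r}" "cocoord \<theta> j \<noteq> cocoord \<beta> j"
    using cocoord_inject[OF root_nonzero highest_root_nonzero] ne by metis
  have "0 < (\<Sum>k=1..r. (cocoord \<theta> k - cocoord \<beta> k) * pairing x (\<alpha> k))"
  proof (rule sum_pos2[OF _ j(1)])
    show "0 \<le> (cocoord \<theta> k - cocoord \<beta> k) * pairing x (\<alpha> k)" if "k \<in> {1..r}" for k
      using cocoord_le_highest_root[OF \<beta> that] alcove_pairing[OF x simple_root_pos[OF that]] by simp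
    show "0 < (cocoord \<theta> j - cocoord \<beta> j) * pairing x (\<alpha> j)"
      using cocoord_le_highest_root[OF \<beta> j(1)] j(2) alcove_pairing[OF x simple_root_pos[OF j(1)]]
      by simp
  qed simp
  also have "\<dots> = pairing x \<theta> - pairing x \<beta>"
    by (simp add: pairing_expand_cocoord[of x \<theta>] pairing_expand_cocoord[of x \<beta>]
        sum_subtractf[symmetric] left_diff_distrib)
  finally show ?thesis
    by simp
qed

text \<open>For \<open>i = 0\<close> the point crosses no wall other than its own because \<open>pairing \<theta> \<beta>\<close>
  is \<open>0\<close> or \<open>1\<close>.\<close>
lemma generator_alcove_pairing:
  assumes x: "x \<in> A" and i: "i \<in> {0..r}" and \<beta>: "\<beta> \<in> P" and ne: "\<beta> \<noteq> wall_root i"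
  shows "0 < pairing (sgen \<alpha> \<theta> i x) \<beta> \<and> pairing (sgen \<alpha> \<theta> i x) \<beta> < 1"
proof (cases "i = 0")
  case False
  then have i1: "i \<in> {1..r}"
    using i by auto
  have "pairing (sgen \<alpha> \<theta> i x) \<beta> = pairing x (saff (\<alpha> i) 0 \<beta>)"
    using False pairing_saff0_swap[OF simple_root_nonzero[OF i1]] by (simp add: sgen_def)
  moreover have "saff (\<alpha> i) 0 \<beta> \<in> P"
    using simple_reflection_pos_root[OF i1 \<beta>] ne False by (simp add: wall_root_def)
  ultimately show ?thesis
    using alcove_pairing[OF x] by simp
next
  case True
  then have \<beta>\<theta>: "\<beta> \<noteq> \<theta>"
    using ne by (simp add: wall_root_def)
  have e: "pairing (sgen \<alpha> \<theta> i x) \<beta> = pairing x \<beta> - (pairing x \<theta> - 1) * pairing \<theta> \<beta>"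
    using True by (simp add: sgen_eq_wall_reflection wall_root_def wall_const_def saff_apply
        pairing_diff_left pairing_scaleR_left)
  have "0 < pairing x \<beta>" "pairing x \<theta> < 1" "pairing x \<beta> < pairing x \<theta>"
    using alcove_pairing[OF x \<beta>] alcove_pairing[OF x highest_root_pos]
      alcove_pairing_less_highest_root[OF x \<beta> \<beta>\<theta>] by simp_all
  with pairing_highest_root_01[OF \<beta> \<beta>\<theta>] show ?thesis
    unfolding e by (elim disjE) simp_all
qed

lemma generator_less_pairing_pos_root_iff:
  assumes x: "x \<in> A" and i: "i \<in> {0..r}" and \<gamma>: "\<gamma> \<in> P"
  shows "(of_int m < pairing (sgen \<alpha> \<theta> i x) \<gamma>) \<noteq> (of_int m < pairing x \<gamma>)
    \<longleftrightarrow> \<gamma> = wall_root i \<and> m = wall_const i"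
proof -
  have side_x: "of_int m < pairing x \<gamma> \<longleftrightarrow> m \<le> 0"
    using of_int_less_between_iff[of 0 "pairing x \<gamma>" m] alcove_pairing[OF x \<gamma>] by simp
  show ?thesis
  proof (cases "\<gamma> = wall_root i")
    case True
    then have "pairing (sgen \<alpha> \<theta> i x) \<gamma> = 2 * of_int (wall_const i) - pairing x \<gamma>"
      using pairing_saff_self[OF wall_root_nonzero[OF i]] by (simp add: sgen_eq_wall_reflection)
    then have "of_int m < pairing (sgen \<alpha> \<theta> i x) \<gamma> \<longleftrightarrow> m \<le> 2 * wall_const i - 1"
      using of_int_less_between_iff[of "2 * wall_const i - 1" _ m] alcove_pairing[OF x \<gamma>] by simp
    then show ?thesis
      using side_x True by (auto simp: wall_const_def)
  next
    case False
    then show ?thesis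
      using side_x of_int_less_between_iff[of 0 _ m] generator_alcove_pairing[OF x i \<gamma>] by simp
  qed
qed

lemma generator_less_pairing_iff:
  assumes x: "x \<in> A" and i: "i \<in> {0..r}" and \<gamma>: "\<gamma> \<in> \<Phi>"
  shows "(of_int m < pairing (sgen \<alpha> \<theta> i x) \<gamma>) \<noteq> (of_int m < pairing x \<gamma>) \<longleftrightarrow>
    (\<gamma> = wall_root i \<and> m = wall_const i) \<or> (\<gamma> = - wall_root i \<and> m = - wall_const i)"
proof (cases "\<gamma> \<in> P")
  case True
  then have "\<gamma> \<noteq> - wall_root i"
    using pos_root_uminus_notin[OF wall_root_pos[OF i]] by auto
  then show ?thesis
    using generator_less_pairing_pos_root_iff[OF x i True] by auto
next
  case False
  then have neg: "- \<gamma> \<in> P"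
    using pos_root_or_uminus[OF \<gamma>] by blast
  have flip: "of_int m < pairing y \<gamma> \<longleftrightarrow> \<not> of_int (- m) < pairing y (- \<gamma>)"
    if "pairing y \<gamma> \<noteq> of_int m" for y
    using that by (auto simp: pairing_minus_right)
  have "(of_int m < pairing (sgen \<alpha> \<theta> i x) \<gamma>) \<noteq> (of_int m < pairing x \<gamma>) \<longleftrightarrow>
      (of_int (- m) < pairing (sgen \<alpha> \<theta> i x) (- \<gamma>)) \<noteq> (of_int (- m) < pairing x (- \<gamma>))"
    using flip[OF alcove_pairing_notin_Ints[OF x \<gamma>]]
      flip[OF generator_alcove_pairing_notin_Ints[OF x i \<gamma>]] by blast
  also have "\<dots> \<longleftrightarrow> - \<gamma> = wall_root i \<and> - m = wall_const i"
    using generator_less_pairing_pos_root_iff[OF x i neg] .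
  finally show ?thesis
    using False wall_root_pos[OF i] by (auto simp: minus_equation_iff[of \<gamma>])
qed

section \<open>Affine maps permuting the walls\<close>

definition root_affine :: "('a \<Rightarrow> 'a) \<Rightarrow> ('a \<Rightarrow> 'a) \<Rightarrow> 'a \<Rightarrow> bool" where
  "root_affine g L b \<longleftrightarrow> orthogonal_transformation L \<and> L ` \<Phi> \<subseteq> \<Phi> \<and> b \<in> weight_lattice \<Phi> \<and>
     (\<forall>x. g x = L x + b)"

lemma root_affine_image:
  assumes "root_affine g L b"
  shows "L ` \<Phi> = \<Phi>"
proof -
  have sub: "L ` \<Phi> \<subseteq> \<Phi>" and "inj L"
    using assms orthogonal_transformation_inj by (auto simp: root_affine_def)
  then have "card (L ` \<Phi>) = card \<Phi>"
    by (simp add: card_image inj_on_subset)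
  then show ?thesis
    using card_subset_eq[OF finite_roots sub] by simp
qed

lemma root_affine_apply: "root_affine g L b \<Longrightarrow> g x = L x + b"
  unfolding root_affine_def by blast

lemma root_affine_pairing:
  assumes "root_affine g L b"
  shows "pairing (g x) (L \<gamma>) = pairing x \<gamma> + pairing b (L \<gamma>)"
  using assms by (simp add: root_affine_def pairing_add_left pairing_orthogonal_transformation)

lemma root_affine_pairing_Ints:
  assumes "root_affine g L b" "\<beta> \<in> \<Phi>"
  shows "pairing b \<beta> \<in> \<int>"
  using assms by (simp add: root_affine_def weight_lattice_def)

lemma root_affine_pairing_preimage:
  assumes g: "root_affine g L b" and \<beta>: "\<beta> \<in> \<Phi>"
  obtains \<gamma> and m :: int where "\<gamma> \<in> \<Phi>" "L \<gamma> = \<beta>" "\<And>x. pairing (g x) \<beta> = pairing x \<gamma> + of_int m"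
proof -
  have "\<beta> \<in> L ` \<Phi>"
    using root_affine_image[OF g] \<beta> by simp
  then obtain \<gamma> where \<gamma>: "\<gamma> \<in> \<Phi>" "L \<gamma> = \<beta>"
    by auto
  obtain m :: int where m: "pairing b \<beta> = of_int m"
    using root_affine_pairing_Ints[OF g \<beta>] by (auto elim: Ints_cases)
  show thesis
  proof (rule that[OF \<gamma>])
    show "pairing (g x) \<beta> = pairing x \<gamma> + of_int m" for x
      using root_affine_pairing[OF g, of x \<gamma>] \<gamma>(2) m by simp
  qed
qed

lemma root_affine_comp:
  assumes g: "root_affine g L b" and g': "root_affine g' L' b'"
  shows "root_affine (g \<circ> g') (L \<circ> L') (L b' + b)"
  unfolding root_affine_def
proof (intro conjI ballI allI)
  show "orthogonal_transformation (L \<circ> L')"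
    using g g' by (simp add: root_affine_def orthogonal_transformation_compose)
  show "(L \<circ> L') ` \<Phi> \<subseteq> \<Phi>"
    using g g' by (auto simp: root_affine_def)
  show "(g \<circ> g') x = (L \<circ> L') x + (L b' + b)" for x
    using g g' by (simp add: root_affine_def orthogonal_transformation_def linear_add)
  show "L b' + b \<in> weight_lattice \<Phi>"
  proof (unfold weight_lattice_def, intro CollectI ballI)
    fix \<beta> assume \<beta>: "\<beta> \<in> \<Phi>"
    then have "\<beta> \<in> L ` \<Phi>"
      using root_affine_image[OF g] by simp
    then obtain \<gamma> where \<gamma>: "\<gamma> \<in> \<Phi>" "L \<gamma> = \<beta>"
      by auto
    have "pairing (L b') \<beta> = pairing b' \<gamma>"
      using g \<gamma>(2) by (auto simp: root_affine_def pairing_orthogonal_transformation)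
    then show "pairing (L b' + b) \<beta> \<in> \<int>"
      using root_affine_pairing_Ints[OF g' \<gamma>(1)] root_affine_pairing_Ints[OF g \<beta>]
      by (simp add: pairing_add_left)
  qed
qed

lemma root_affine_translation: "b \<in> weight_lattice \<Phi> \<Longrightarrow> root_affine (\<lambda>x. x + b) id b"
  by (simp add: root_affine_def id_def)

lemma root_affine_sgen:
  assumes i: "i \<in> {0..r}"
  shows "root_affine (sgen \<alpha> \<theta> i) (sbar \<alpha> \<theta> i) (sgen \<alpha> \<theta> i 0)"
proof -
  let ?\<rho> = "root_idx \<alpha> \<theta> i" and ?c = "if i = 0 then -1 else 0 :: real"
  have \<rho>: "?\<rho> \<in> \<Phi>"
    using i by (auto simp: root_idx_def roots_uminus_closed highest_root_in_roots simple_root_in_roots)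
  have sgen: "sgen \<alpha> \<theta> i x = saff ?\<rho> 0 x + ?c *\<^sub>R ?\<rho>" for x
    by (simp add: sgen_def root_idx_def saff_apply algebra_simps)
  have "orthogonal_transformation (saff ?\<rho> 0)"
    using orthogonal_transformation_saff0 root_nonzero[OF \<rho>] .
  moreover have "saff ?\<rho> 0 ` \<Phi> \<subseteq> \<Phi>"
    using roots_reflection_closed[OF \<rho>] by auto
  moreover have "pairing (?c *\<^sub>R ?\<rho>) \<beta> \<in> \<int>" if "\<beta> \<in> \<Phi>" for \<beta>
    using pairing_roots_Ints[OF that \<rho>] by (simp add: pairing_scaleR_left)
  moreover have "sgen \<alpha> \<theta> i 0 = ?c *\<^sub>R ?\<rho>"
    using sgen[of 0] by (simp add: saff_apply)
  ultimately show ?thesis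
    unfolding root_affine_def weight_lattice_def sbar_def using sgen by simp
qed

lemma root_affine_wprod:
  "set w \<subseteq> {0..r} \<Longrightarrow> root_affine (wprod \<alpha> \<theta> w) (wbarprod \<alpha> \<theta> w) (wprod \<alpha> \<theta> w 0)"
proof (induction w)
  case Nil
  have "root_affine (\<lambda>x. x) (\<lambda>x. x) 0"
    by (simp add: root_affine_def weight_lattice_def)
  then show ?case
    by (simp add: id_def)
next
  case (Cons i w)
  then have i: "i \<in> {0..r}" and w: "set w \<subseteq> {0..r}"
    by auto
  have "root_affine (sgen \<alpha> \<theta> i \<circ> wprod \<alpha> \<theta> w) (sbar \<alpha> \<theta> i \<circ> wbarprod \<alpha> \<theta> w)
      (sbar \<alpha> \<theta> i (wprod \<alpha> \<theta> w 0) + sgen \<alpha> \<theta> i 0)"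
    using root_affine_comp[OF root_affine_sgen[OF i] Cons.IH[OF w]] .
  moreover have "sbar \<alpha> \<theta> i (wprod \<alpha> \<theta> w 0) + sgen \<alpha> \<theta> i 0 = wprod \<alpha> \<theta> (i # w) 0"
    using root_affine_apply[OF root_affine_sgen[OF i], of "wprod \<alpha> \<theta> w 0"] by (simp add: wprod_Cons)
  ultimately show ?case
    by (metis wprod_Cons wbarprod_Cons)
qed

lemma wprod_rev_cancel: "set w \<subseteq> {0..r} \<Longrightarrow> wprod \<alpha> \<theta> (rev w) (wprod \<alpha> \<theta> w x) = x"
proof (induction w arbitrary: x)
  case (Cons i w)
  then have "i \<in> {0..r}" "set w \<subseteq> {0..r}"
    by auto
  then show ?case
    using Cons.IH by (simp add: wprod_append wprod_Cons sgen_sgen)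
qed simp

lemma wprod_cancel_rev: "set w \<subseteq> {0..r} \<Longrightarrow> wprod \<alpha> \<theta> w (wprod \<alpha> \<theta> (rev w) x) = x"
  using wprod_rev_cancel[of "rev w" x] by simp

text \<open>Points of \<open>A\<close> lie on the same side of every wall, so a map permuting the walls
  that sends one point of \<open>A\<close> into \<open>A\<close> sends all of \<open>A\<close> into \<open>A\<close>.\<close>
lemma root_affine_alcove:
  assumes g: "root_affine g L b" and x: "x \<in> A" and gx: "g x \<in> A" and y: "y \<in> A"
  shows "g y \<in> A"
  unfolding fund_alcove_def
proof (intro CollectI ballI)
  fix \<beta> assume \<beta>: "\<beta> \<in> P"
  then have "\<beta> \<in> \<Phi>"
    using pos_roots_subset by auto
  then obtain \<gamma> and m :: int where \<gamma>: "\<gamma> \<in> \<Phi>" and "L \<gamma> = \<beta>"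
    and pg: "\<And>x. pairing (g x) \<beta> = pairing x \<gamma> + of_int m"
    by (rule root_affine_pairing_preimage[OF g]) blast
  have side: "of_int n < pairing y \<gamma> \<longleftrightarrow> of_int n < pairing x \<gamma>" for n
    unfolding alcove_less_pairing_iff[OF x \<gamma>] alcove_less_pairing_iff[OF y \<gamma>] ..
  have "of_int (- m) < pairing x \<gamma>" "\<not> of_int (1 - m) < pairing x \<gamma>"
    using alcove_pairing[OF gx \<beta>] pg[of x] by simp_all
  then have "of_int (- m) < pairing y \<gamma>" "pairing y \<gamma> < of_int (1 - m)"
    using side[of "- m"] side[of "1 - m"] alcove_pairing_notin_Ints[OF y \<gamma>, of "1 - m"] by auto
  then show "0 < pairing (g y) \<beta> \<and> pairing (g y) \<beta> < 1"
    using pg[of y] by simp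
qed

section \<open>Separating walls and the stabiliser of the alcove\<close>

text \<open>As in \<open>R_pairs\<close>, a pair \<open>(\<beta>, k)\<close> with \<open>\<beta>\<close> positive stands for the wall
  \<open>{x. pairing x \<beta> = k}\<close>; it separates \<open>y\<close> from \<open>A\<close> when \<open>y\<close> lies on the other side of it.\<close>
definition separating_walls :: "'a \<Rightarrow> ('a \<times> int) set" where
  "separating_walls y = {(\<beta>, k). \<beta> \<in> P \<and> (of_int k < pairing y \<beta>) \<noteq> (k \<le> 0)}"

lemma separating_walls_alcove: "y \<in> A \<Longrightarrow> separating_walls y = {}"
  unfolding separating_walls_def using alcove_pairing of_int_less_between_iff[of 0] by fastforce

definition crosses_wall :: "('a \<Rightarrow> 'a) \<Rightarrow> nat \<Rightarrow> 'a \<Rightarrow> 'a \<times> int \<Rightarrow> bool" where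
  "crosses_wall g i x h \<longleftrightarrow> fst h \<in> P \<and> g \<circ> sgen \<alpha> \<theta> i = saff (fst h) (of_int (snd h)) \<circ> g \<and>
     (\<forall>h'. h' \<in> separating_walls (g (sgen \<alpha> \<theta> i x)) \<longleftrightarrow> (h' \<in> separating_walls (g x)) \<noteq> (h' = h))"

lemma root_affine_comp_sgen:
  assumes g: "root_affine g L c" and i: "i \<in> {0..r}"
  shows "g \<circ> sgen \<alpha> \<theta> i =
    saff (L (wall_root i)) (of_int (wall_const i) + pairing c (L (wall_root i))) \<circ> g"
proof
  fix y
  show "(g \<circ> sgen \<alpha> \<theta> i) y =
      (saff (L (wall_root i)) (of_int (wall_const i) + pairing c (L (wall_root i))) \<circ> g) y"
    using saff_conjugate[of L g c "wall_root i" "of_int (wall_const i)" y] g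
    by (simp add: sgen_eq_wall_reflection root_affine_def)
qed

lemma separating_walls_sgen_iff:
  assumes g: "root_affine g L c" and x: "x \<in> A" and i: "i \<in> {0..r}" and \<beta>: "\<beta> \<in> P"
  defines "\<beta>' \<equiv> L (wall_root i)" and "k' \<equiv> of_int (wall_const i) + pairing c (L (wall_root i))"
  shows "((\<beta>, k) \<in> separating_walls (g (sgen \<alpha> \<theta> i x))) \<noteq> ((\<beta>, k) \<in> separating_walls (g x)) \<longleftrightarrow>
    (\<beta> = \<beta>' \<and> of_int k = k') \<or> (\<beta> = - \<beta>' \<and> of_int k = - k')"
proof -
  have "\<beta> \<in> \<Phi>"
    using \<beta> pos_roots_subset by auto
  then obtain \<gamma> and m :: int where \<gamma>: "\<gamma> \<in> \<Phi>" "L \<gamma> = \<beta>"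
    and pg: "\<And>x. pairing (g x) \<beta> = pairing x \<gamma> + of_int m"
    by (rule root_affine_pairing_preimage[OF g]) blast
  have m: "of_int m = pairing c \<beta>"
    using pg[of 0] root_affine_apply[OF g, of 0] g
    by (simp add: root_affine_def orthogonal_transformation_def linear_0)
  have L: "inj L" "linear L"
    using g orthogonal_transformation_inj by (auto simp: root_affine_def orthogonal_transformation_def)
  have side: "(\<beta>, k) \<in> separating_walls (g y) \<longleftrightarrow> (of_int (k - m) < pairing y \<gamma>) \<noteq> (k \<le> 0)" for y
    using \<beta> pg[of y] by (simp add: separating_walls_def diff_less_eq)
  have "((\<beta>, k) \<in> separating_walls (g (sgen \<alpha> \<theta> i x))) \<noteq> ((\<beta>, k) \<in> separating_walls (g x)) \<longleftrightarrow>
      (of_int (k - m) < pairing (sgen \<alpha> \<theta> i x) \<gamma>) \<noteq> (of_int (k - m) < pairing x \<gamma>)"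
    unfolding side by blast
  also have "\<dots> \<longleftrightarrow> (\<gamma> = wall_root i \<and> k - m = wall_const i) \<or> (\<gamma> = - wall_root i \<and> k - m = - wall_const i)"
    by (rule generator_less_pairing_iff[OF x i \<gamma>(1)])
  also have "\<dots> \<longleftrightarrow> (\<beta> = \<beta>' \<and> of_int k = k') \<or> (\<beta> = - \<beta>' \<and> of_int k = - k')"
  proof -
    have "L (- wall_root i) = - \<beta>'"
      using L(2) by (simp add: \<beta>'_def linear_neg)
    then have "\<gamma> = wall_root i \<longleftrightarrow> \<beta> = \<beta>'" "\<gamma> = - wall_root i \<longleftrightarrow> \<beta> = - \<beta>'"
      using inj_eq[OF L(1)] \<gamma>(2) unfolding \<beta>'_def by metis+
    moreover have "pairing c (- \<beta>') = - pairing c \<beta>'"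
      by (rule pairing_minus_right)
    ultimately show ?thesis
      using m by (auto simp: k'_def \<beta>'_def)
  qed
  finally show ?thesis .
qed

lemma crosses_wallI:
  assumes h: "fst h \<in> P" and conj: "g \<circ> sgen \<alpha> \<theta> i = saff (fst h) (of_int (snd h)) \<circ> g"
    and flip: "\<And>\<beta> k. \<beta> \<in> P \<Longrightarrow>
      ((\<beta>, k) \<in> separating_walls (g (sgen \<alpha> \<theta> i x))) \<noteq> ((\<beta>, k) \<in> separating_walls (g x)) \<longleftrightarrow>
      (\<beta>, k) = h \<or> (\<beta>, k) = (- fst h, - snd h)"
  shows "crosses_wall g i x h"
  unfolding crosses_wall_def
proof (intro conjI allI h conj)
  fix h' :: "'a \<times> int"
  obtain \<beta> k where h': "h' = (\<beta>, k)"
    by fastforce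
  show "h' \<in> separating_walls (g (sgen \<alpha> \<theta> i x)) \<longleftrightarrow> (h' \<in> separating_walls (g x)) \<noteq> (h' = h)"
  proof (cases "\<beta> \<in> P")
    case True
    then have "(\<beta>, k) \<noteq> (- fst h, - snd h)"
      using pos_root_uminus_notin[OF h] by auto
    then show ?thesis
      using flip[OF True, of k] h' by blast
  next
    case False
    then show ?thesis
      using h h' by (auto simp: separating_walls_def)
  qed
qed

lemma root_affine_crosses_wall:
  assumes g: "root_affine g L c" and x: "x \<in> A" and i: "i \<in> {0..r}"
  obtains h where "crosses_wall g i x h"
proof -
  define \<beta>' where "\<beta>' = L (wall_root i)"
  have \<beta>'\<Phi>: "\<beta>' \<in> \<Phi>"
    using g wall_root_pos[OF i] pos_roots_subset by (auto simp: root_affine_def \<beta>'_def)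
  obtain m0 :: int where m0: "pairing c \<beta>' = of_int m0"
    using root_affine_pairing_Ints[OF g \<beta>'\<Phi>] by (auto elim: Ints_cases)
  define k' where "k' = wall_const i + m0"
  have conj: "g \<circ> sgen \<alpha> \<theta> i = saff \<beta>' (of_int k') \<circ> g"
    using root_affine_comp_sgen[OF g i] m0 by (simp add: \<beta>'_def k'_def)
  have k'_iff: "of_int k = of_int (wall_const i) + pairing c \<beta>' \<longleftrightarrow> k = k'"
    "of_int k = - (of_int (wall_const i) + pairing c \<beta>') \<longleftrightarrow> k = - k'" for k :: int
    unfolding m0 k'_def by (metis of_int_add of_int_eq_iff, metis of_int_add of_int_minus of_int_eq_iff)
  have flip: "((\<beta>, k) \<in> separating_walls (g (sgen \<alpha> \<theta> i x))) \<noteq> ((\<beta>, k) \<in> separating_walls (g x)) \<longleftrightarrow>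
      (\<beta>, k) = (\<beta>', k') \<or> (\<beta>, k) = (- \<beta>', - k')" if "\<beta> \<in> P" for \<beta> k
    using separating_walls_sgen_iff[OF g x i that, of k, folded \<beta>'_def] k'_iff[of k] by simp
  show thesis
  proof (cases "\<beta>' \<in> P")
    case True
    have "crosses_wall g i x (\<beta>', k')"
      by (rule crosses_wallI) (use True conj flip in simp_all)
    then show thesis
      by (rule that)
  next
    case False
    then have "- \<beta>' \<in> P"
      using pos_root_or_uminus[OF \<beta>'\<Phi>] by blast
    moreover have "saff (- \<beta>') (of_int (- k')) = saff \<beta>' (of_int k')"
      using saff_minus[of \<beta>' "of_int k'"] by simp
    ultimately have "crosses_wall g i x (- \<beta>', - k')"
      by (intro crosses_wallI) (use conj flip in auto)
    then show thesis
      by (rule that)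
  qed
qed

lemma crosses_wall_wprod:
  assumes w: "set w \<subseteq> {0..r}" and x: "x \<in> A"
  obtains H where "\<And>j. j < length w \<Longrightarrow> crosses_wall (wprod \<alpha> \<theta> (take j w)) (w ! j) x (H j)"
proof -
  have "\<exists>h. crosses_wall (wprod \<alpha> \<theta> (take j w)) (w ! j) x h" if j: "j < length w" for j
  proof -
    have "set (take j w) \<subseteq> {0..r}"
      using w by (meson order_trans set_take_subset)
    moreover have "w ! j \<in> {0..r}"
      using w nth_mem[OF j] by (rule subsetD)
    ultimately obtain h where "crosses_wall (wprod \<alpha> \<theta> (take j w)) (w ! j) x h"
      using root_affine_crosses_wall[OF root_affine_wprod x] by blast
    then show ?thesis ..
  qed
  then have "\<forall>j. \<exists>h. j < length w \<longrightarrow> crosses_wall (wprod \<alpha> \<theta> (take j w)) (w ! j) x h"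
    by blast
  then obtain H where "\<forall>j. j < length w \<longrightarrow> crosses_wall (wprod \<alpha> \<theta> (take j w)) (w ! j) x (H j)"
    by (metis choice)
  then show thesis
    by (metis that)
qed

lemma card_separating_walls_wprod:
  assumes "set w \<subseteq> {0..r}" and x: "x \<in> A"
  shows "finite (separating_walls (wprod \<alpha> \<theta> w x)) \<and>
    card (separating_walls (wprod \<alpha> \<theta> w x)) \<le> length w"
  using assms(1)
proof (induction w rule: rev_induct)
  case Nil
  then show ?case
    using separating_walls_alcove[OF x] by simp
next
  case (snoc i w)
  then have w: "set w \<subseteq> {0..r}" and i: "i \<in> {0..r}"
    by auto
  let ?S = "separating_walls (wprod \<alpha> \<theta> w x)"
  obtain h where "crosses_wall (wprod \<alpha> \<theta> w) i x h"
    using root_affine_crosses_wall[OF root_affine_wprod[OF w] x i] .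
  then have "separating_walls (wprod \<alpha> \<theta> w (sgen \<alpha> \<theta> i x)) \<subseteq> insert h ?S"
    unfolding crosses_wall_def by blast
  then have sub: "separating_walls (wprod \<alpha> \<theta> (w @ [i]) x) \<subseteq> insert h ?S"
    by (simp add: wprod_snoc)
  have fin: "finite (insert h ?S)"
    using snoc.IH[OF w] by simp
  have "card (separating_walls (wprod \<alpha> \<theta> (w @ [i]) x)) \<le> card (insert h ?S)"
    by (rule card_mono[OF fin sub])
  also have "\<dots> \<le> Suc (card ?S)"
    using snoc.IH[OF w] by (simp add: card_insert_if)
  finally show ?case
    using snoc.IH[OF w] finite_subset[OF sub fin] by simp
qed

lemma separating_walls_take:
  assumes x: "x \<in> A"
    and H: "\<And>j. j < length w \<Longrightarrow> crosses_wall (wprod \<alpha> \<theta> (take j w)) (w ! j) x (H j)"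
    and inj: "inj_on H {..<length w}" and "j \<le> length w"
  shows "separating_walls (wprod \<alpha> \<theta> (take j w) x) = H ` {..<j}"
  using \<open>j \<le> length w\<close>
proof (induction j)
  case 0
  then show ?case
    using separating_walls_alcove[OF x] by simp
next
  case (Suc j)
  then have j: "j < length w"
    by simp
  have "h \<in> separating_walls (wprod \<alpha> \<theta> (take j w) (sgen \<alpha> \<theta> (w ! j) x)) \<longleftrightarrow>
      (h \<in> separating_walls (wprod \<alpha> \<theta> (take j w) x)) \<noteq> (h = H j)" for h
    using H[OF j] unfolding crosses_wall_def by blast
  then have step: "h \<in> separating_walls (wprod \<alpha> \<theta> (take (Suc j) w) x) \<longleftrightarrow> (h \<in> H ` {..<j}) \<noteq> (h = H j)"
    for h
    using Suc.IH j by (simp add: wprod_take_Suc[OF j])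
  have nin: "H j \<notin> H ` {..<j}"
  proof
    assume "H j \<in> H ` {..<j}"
    then obtain i where "i < j" "H j = H i"
      by auto
    then show False
      using inj_onD[OF inj, of j i] j by simp
  qed
  show ?case
  proof (rule set_eqI)
    fix h
    have "h \<in> H ` {..<Suc j} \<longleftrightarrow> h = H j \<or> h \<in> H ` {..<j}"
      by (simp add: lessThan_Suc)
    then show "h \<in> separating_walls (wprod \<alpha> \<theta> (take (Suc j) w) x) \<longleftrightarrow> h \<in> H ` {..<Suc j}"
      using step[of h] nin by (cases "h = H j") auto
  qed
qed

lemma wprod_delete_pair:
  assumes ab: "a < b" "b < length w" and \<rho>: "\<rho> \<circ> \<rho> = id"
    and ha: "wprod \<alpha> \<theta> (take a w) \<circ> sgen \<alpha> \<theta> (w ! a) = \<rho> \<circ> wprod \<alpha> \<theta> (take a w)"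
    and hb: "wprod \<alpha> \<theta> (take b w) \<circ> sgen \<alpha> \<theta> (w ! b) = \<rho> \<circ> wprod \<alpha> \<theta> (take b w)"
  shows "wprod \<alpha> \<theta> w = wprod \<alpha> \<theta> (take a w @ drop (Suc a) (take b w) @ drop (Suc b) w)"
proof -
  let ?p = "\<lambda>j. wprod \<alpha> \<theta> (take j w)"
  define M where "M = wprod \<alpha> \<theta> (drop (Suc a) (take b w))"
  have split: "take b w = take (Suc a) w @ drop (Suc a) (take b w)"
    using ab by (metis append_take_drop_id min.absorb1 Suc_leI take_take)
  have "?p b = ?p (Suc a) \<circ> M"
    by (subst split) (simp only: wprod_append M_def)
  also have "?p (Suc a) = \<rho> \<circ> ?p a"
    using ha wprod_take_Suc[of a w \<alpha> \<theta>] ab by simp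
  finally have pb: "?p b = \<rho> \<circ> ?p a \<circ> M" .
  have "?p (Suc b) = \<rho> \<circ> ?p b"
    using hb wprod_take_Suc[of b w \<alpha> \<theta>] ab by simp
  also have "\<dots> = ?p a \<circ> M"
    unfolding pb by (simp only: comp_assoc[symmetric] \<rho> id_comp)
  finally have "wprod \<alpha> \<theta> w = ?p a \<circ> M \<circ> wprod \<alpha> \<theta> (drop (Suc b) w)"
    by (metis append_take_drop_id wprod_append)
  then show ?thesis
    by (simp add: M_def wprod_append comp_assoc)
qed

text \<open>A word sending a point of \<open>A\<close> into \<open>A\<close> either crosses no wall at all, and is empty, or
  crosses some wall twice, and the two crossings cancel.\<close>
lemma wprod_eq_id_if_alcove:
  assumes "set w \<subseteq> {0..r}" and x: "x \<in> A" and "wprod \<alpha> \<theta> w x \<in> A"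
  shows "wprod \<alpha> \<theta> w = id"
  using assms(1,3)
proof (induction "length w" arbitrary: w rule: less_induct)
  case less
  obtain H where H: "\<And>j. j < length w \<Longrightarrow> crosses_wall (wprod \<alpha> \<theta> (take j w)) (w ! j) x (H j)"
    by (rule crosses_wall_wprod[OF less.prems(1) x]) blast
  show ?case
  proof (cases "inj_on H {..<length w}")
    case True
    then have "H ` {..<length w} = {}"
      using separating_walls_take[OF x H True, of "length w"] separating_walls_alcove[OF less.prems(2)]
      by simp
    then have "w = []"
      by (simp add: lessThan_empty_iff)
    then show ?thesis
      by simp
  next
    case False
    then obtain a b where "a < length w" "b < length w" "a \<noteq> b" "H a = H b"
      by (auto simp: inj_on_def)
    then obtain a b where ab: "a < b" "b < length w" "H a = H b"
      by (metis linorder_neqE_nat order.strict_trans)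
    define \<rho> where "\<rho> = saff (fst (H a)) (of_int (snd (H a)))"
    have "fst (H a) \<noteq> 0"
      using H[of a] ab pos_roots_subset root_nonzero by (auto simp: crosses_wall_def)
    then have \<rho>: "\<rho> \<circ> \<rho> = id"
      by (simp add: \<rho>_def fun_eq_iff saff_saff)
    define w' where "w' = take a w @ drop (Suc a) (take b w) @ drop (Suc b) w"
    have "wprod \<alpha> \<theta> w = wprod \<alpha> \<theta> w'"
      unfolding w'_def using H[of a] H[of b] ab
      by (intro wprod_delete_pair[OF ab(1,2) \<rho>]) (simp_all add: crosses_wall_def \<rho>_def)
    moreover have "length w' < length w"
      using ab by (simp add: w'_def)
    moreover have "set w' \<subseteq> {0..r}"
      using less.prems(1) by (auto simp: w'_def dest: in_set_takeD in_set_dropD)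
    ultimately show ?thesis
      using less.hyps less.prems(2) by metis
  qed
qed

section \<open>The walls between \<open>A\<close> and \<open>A - lam\<close>\<close>

lemma R_pairs_crossing_time:
  assumes p: "p \<in> A" and lam: "lam \<in> weight_lattice \<Phi>" and h: "(\<beta>, k) \<in> R_pairs \<Phi> \<alpha> r lam"
  shows "\<beta> \<in> P" "pairing lam \<beta> \<noteq> 0" "0 < pairing lam \<beta> \<longleftrightarrow> k \<le> 0"
    "0 < crossing_time p lam (\<beta>, k)" "crossing_time p lam (\<beta>, k) < 1"
proof -
  have \<beta>: "\<beta> \<in> P" and c: "(pairing lam \<beta> > 0 \<and> 0 \<ge> k \<and> of_int k > - pairing lam \<beta>) \<or>
      (pairing lam \<beta> < 0 \<and> 0 < k \<and> of_int k \<le> - pairing lam \<beta>)"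
    using h by (auto simp: R_pairs_def)
  show "\<beta> \<in> P" "pairing lam \<beta> \<noteq> 0" "0 < pairing lam \<beta> \<longleftrightarrow> k \<le> 0"
    using \<beta> c by auto
  obtain n :: int where n: "pairing lam \<beta> = of_int n"
    using lam \<beta> pos_roots_subset by (auto simp: weight_lattice_def elim!: Ints_cases)
  then have c': "(0 < n \<and> k \<le> 0 \<and> - n < k) \<or> (n < 0 \<and> 0 < k \<and> k \<le> - n)"
    using c by linarith
  have v: "0 < pairing p \<beta>" "pairing p \<beta> < 1"
    using alcove_pairing[OF p \<beta>] by auto
  from c' show "0 < crossing_time p lam (\<beta>, k)" "crossing_time p lam (\<beta>, k) < 1"
  proof (safe)
    assume "0 < n" "k \<le> 0" "- n < k"
    then have "0 < pairing p \<beta> - of_int k" "pairing p \<beta> - of_int k < of_int n"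
      using v by linarith+
    then show "0 < crossing_time p lam (\<beta>, k)" "crossing_time p lam (\<beta>, k) < 1"
      using \<open>0 < n\<close> n by (simp_all add: crossing_time_def)
  next
    assume "n < 0" "0 < k" "k \<le> - n"
    then have "pairing p \<beta> - of_int k < 0" "of_int n < pairing p \<beta> - of_int k"
      using v by linarith+
    then show "0 < crossing_time p lam (\<beta>, k)" "crossing_time p lam (\<beta>, k) < 1"
      using \<open>n < 0\<close> n by (simp_all add: crossing_time_def divide_neg_neg divide_less_eq)
  qed
qed

lemma wall_hit_in_R_pairs:
  assumes p: "p \<in> A" and lam: "lam \<in> weight_lattice \<Phi>" and \<beta>: "\<beta> \<in> P"
    and t: "0 < t" "t \<le> 1" and hit: "pairing (p - t *\<^sub>R lam) \<beta> = of_int k"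
  shows "(\<beta>, k) \<in> R_pairs \<Phi> \<alpha> r lam" and "t = crossing_time p lam (\<beta>, k)"
proof -
  obtain n :: int where n: "pairing lam \<beta> = of_int n"
    using lam \<beta> pos_roots_subset by (auto simp: weight_lattice_def elim!: Ints_cases)
  have v: "0 < pairing p \<beta>" "pairing p \<beta> < 1"
    using alcove_pairing[OF p \<beta>] by auto
  have e: "pairing p \<beta> - t * of_int n = of_int k"
    using hit n by (simp add: pairing_diff_left pairing_scaleR_left)
  have "n \<noteq> 0"
    using e v of_int_neq_between[of 0 "pairing p \<beta>" k] by auto
  then have "(n > 0 \<and> k \<le> 0 \<and> - n < k) \<or> (n < 0 \<and> 0 < k \<and> k \<le> - n)"
  proof (cases "n > 0")
    case True
    then have "0 < t * of_int n" "t * of_int n \<le> of_int n"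
      using t by (simp_all add: mult_le_cancel_right1)
    then have "of_int k < (1::real)" "- of_int n < (of_int k :: real)"
      using e v by linarith+
    then show ?thesis
      using True by linarith
  next
    case False
    then have "n < 0"
      using \<open>n \<noteq> 0\<close> by simp
    then have "t * of_int n < 0" "of_int n \<le> t * of_int n"
      using t by (simp_all add: mult_pos_neg mult_le_cancel_right2)
    then have "(0::real) < of_int k" "of_int k < 1 - (of_int n :: real)"
      using e v by linarith+
    then show ?thesis
      using \<open>n < 0\<close> by linarith
  qed
  then show "(\<beta>, k) \<in> R_pairs \<Phi> \<alpha> r lam"
    using \<beta> n by (auto simp: R_pairs_def)
  show "t = crossing_time p lam (\<beta>, k)"
    using e n \<open>n \<noteq> 0\<close> by (simp add: crossing_time_def field_simps)
qed

definition regular :: "'a \<Rightarrow> bool" where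
  "regular y \<longleftrightarrow> (\<forall>\<gamma>\<in>\<Phi>. \<forall>m. pairing y \<gamma> \<noteq> of_int m)"

lemma regular_pairing_neq_01:
  assumes "regular y" "\<beta> \<in> P"
  shows "pairing y \<beta> \<noteq> 0" "pairing y \<beta> \<noteq> 1"
  using assms pos_roots_subset unfolding regular_def by (metis of_int_0 of_int_1 subsetD)+

lemma root_affine_regular:
  assumes g: "root_affine g L b" and y: "regular y"
  shows "regular (g y)"
  unfolding regular_def
proof (intro ballI allI)
  fix \<beta> k assume "\<beta> \<in> \<Phi>"
  then obtain \<gamma> and m :: int where "\<gamma> \<in> \<Phi>" "L \<gamma> = \<beta>" "\<And>x. pairing (g x) \<beta> = pairing x \<gamma> + of_int m"
    by (rule root_affine_pairing_preimage[OF g]) blast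
  then show "pairing (g y) \<beta> \<noteq> of_int k"
    using y[unfolded regular_def] by (metis add_diff_cancel_right' of_int_diff)
qed

lemma alcove_lower_bound:
  "y \<in> A \<Longrightarrow> i \<in> {0..r} \<Longrightarrow> of_int (if i = 0 then -1 else 0) < pairing y (root_idx \<alpha> \<theta> i)"
  using alcove_pairing[OF _ highest_root_pos] alcove_pairing[OF _ simple_root_pos]
  by (auto simp: root_idx_def pairing_minus_right)

text \<open>On \<open>{x. pairing x \<gamma> = 0}\<close> all simple roots in the support of \<open>\<gamma>\<close> vanish, and on
  \<open>{x. pairing x \<gamma> = 1}\<close> the larger root \<open>\<theta>\<close> also reaches \<open>1\<close>.\<close>
lemma closed_alcove_on_wall:
  assumes closed: "\<And>\<beta>. \<beta> \<in> P \<Longrightarrow> 0 \<le> pairing z \<beta> \<and> pairing z \<beta> \<le> 1"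
    and \<gamma>: "\<gamma> \<in> P" and hit: "pairing z \<gamma> = of_int m"
  obtains i where "i \<in> {0..r}" "pairing z (wall_root i) = of_int (wall_const i)"
proof -
  have \<gamma>\<Phi>: "\<gamma> \<in> \<Phi>"
    using \<gamma> pos_roots_subset by auto
  have z\<alpha>: "0 \<le> pairing z (\<alpha> j)" if "j \<in> {1..r}" for j
    using closed[OF simple_root_pos[OF that]] by simp
  have c\<gamma>: "0 \<le> cocoord \<gamma> j" if "j \<in> {1..r}" for j
    using pos_root_iff[OF \<gamma>\<Phi>] \<gamma> that by blast
  have "m = 0 \<or> m = 1"
    using closed[OF \<gamma>] hit by auto
  then show thesis
  proof
    assume "m = 0"
    obtain j where j: "j \<in> {1..r}" "cocoord \<gamma> j \<noteq> 0"
      using cocoord_nonzero[OF root_nonzero[OF \<gamma>\<Phi>]] by blast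
    have "(\<Sum>j=1..r. cocoord \<gamma> j * pairing z (\<alpha> j)) = 0"
      using hit \<open>m = 0\<close> pairing_expand_cocoord[of z \<gamma>] by simp
    then have "cocoord \<gamma> j * pairing z (\<alpha> j) = 0"
      using sum_nonneg_eq_0_iff[of "{1..r}" "\<lambda>j. cocoord \<gamma> j * pairing z (\<alpha> j)"] c\<gamma> z\<alpha> j(1) by simp
    then have "pairing z (wall_root j) = of_int (wall_const j)"
      using j by (simp add: wall_root_def wall_const_def)
    moreover have "j \<in> {0..r}"
      using j(1) by simp
    ultimately show thesis
      using that by blast
  next
    assume "m = 1"
    have "pairing z \<gamma> = (\<Sum>j=1..r. cocoord \<gamma> j * pairing z (\<alpha> j))"
      by (rule pairing_expand_cocoord)
    also have "\<dots> \<le> (\<Sum>j=1..r. cocoord \<theta> j * pairing z (\<alpha> j))"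
      by (intro sum_mono mult_right_mono cocoord_le_highest_root[OF \<gamma>] z\<alpha>)
    also have "\<dots> = pairing z \<theta>"
      by (rule pairing_expand_cocoord[symmetric])
    finally have "pairing z \<theta> = 1"
      using closed[OF highest_root_pos] hit \<open>m = 1\<close> by simp
    then show thesis
      using that[of 0] by (simp add: wall_root_def wall_const_def)
  qed
qed

lemma separating_walls_translate:
  assumes lam: "lam \<in> weight_lattice \<Phi>" and y: "y \<in> A"
  shows "separating_walls (y - lam) = R_pairs \<Phi> \<alpha> r lam"
proof (rule set_eqI)
  fix h :: "'a \<times> int"
  obtain \<beta> k where h: "h = (\<beta>, k)"
    by fastforce
  show "h \<in> separating_walls (y - lam) \<longleftrightarrow> h \<in> R_pairs \<Phi> \<alpha> r lam"
  proof (cases "\<beta> \<in> P")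
    case False
    then show ?thesis
      by (simp add: h separating_walls_def R_pairs_def)
  next
    case True
    obtain n :: int where n: "pairing lam \<beta> = of_int n"
      using lam True pos_roots_subset by (auto simp: weight_lattice_def elim!: Ints_cases)
    have "of_int k < pairing (y - lam) \<beta> \<longleftrightarrow> of_int (k + n) < pairing y \<beta>"
      using n by (simp add: pairing_diff_left) linarith
    also have "\<dots> \<longleftrightarrow> k + n \<le> 0"
      using of_int_less_between_iff[of 0 "pairing y \<beta>" "k + n"] alcove_pairing[OF y True] by simp
    finally have side: "of_int k < pairing (y - lam) \<beta> \<longleftrightarrow> k + n \<le> 0" .
    have "(k + n \<le> 0) \<noteq> (k \<le> 0) \<longleftrightarrow> (0 < n \<and> k \<le> 0 \<and> - n < k) \<or> (n < 0 \<and> 0 < k \<and> k \<le> - n)"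
      by auto
    moreover have "- real_of_int n < of_int k \<longleftrightarrow> - n < k" "real_of_int k \<le> - of_int n \<longleftrightarrow> k \<le> - n"
      by linarith+
    ultimately show ?thesis
      using True n side by (simp add: h separating_walls_def R_pairs_def)
  qed
qed

lemma wprod_image_alcove:
  assumes lam: "lam \<in> weight_lattice \<Phi>" and p: "p \<in> A" and w: "set w \<subseteq> {0..r}"
    and w_end: "wprod \<alpha> \<theta> (rev w) (p - lam) \<in> A"
  shows "wprod \<alpha> \<theta> w ` A = (\<lambda>x. x - lam) ` A"
proof -
  have neg: "- lam \<in> weight_lattice \<Phi>"
    using lam by (simp add: weight_lattice_def pairing_minus_left)
  have gens: "set (rev w) \<subseteq> {0..r}"
    using w by simp
  obtain L b where g: "root_affine (wprod \<alpha> \<theta> (rev w) \<circ> (\<lambda>x. x + - lam)) L b"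
    using root_affine_comp[OF root_affine_wprod[OF gens] root_affine_translation[OF neg]] by (rule that)
  have inverse_in: "wprod \<alpha> \<theta> (rev w) (x - lam) \<in> A" if "x \<in> A" for x
    using root_affine_alcove[OF g p _ that] w_end by simp
  obtain L' b' where g': "root_affine ((\<lambda>x. x + lam) \<circ> wprod \<alpha> \<theta> w) L' b'"
    using root_affine_comp[OF root_affine_translation[OF lam] root_affine_wprod[OF w]] by (rule that)
  have forward_in: "wprod \<alpha> \<theta> w y + lam \<in> A" if "y \<in> A" for y
    using root_affine_alcove[OF g' w_end _ that] p wprod_cancel_rev[OF w] by simp
  show ?thesis
  proof (intro equalityI subsetI)
    fix v assume "v \<in> wprod \<alpha> \<theta> w ` A"
    then obtain y where "y \<in> A" "v = wprod \<alpha> \<theta> w y"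
      by blast
    then show "v \<in> (\<lambda>x. x - lam) ` A"
      using forward_in by (metis add_diff_cancel image_eqI)
  next
    fix v assume "v \<in> (\<lambda>x. x - lam) ` A"
    then obtain x where "x \<in> A" "v = x - lam"
      by blast
    then show "v \<in> wprod \<alpha> \<theta> w ` A"
      using inverse_in wprod_cancel_rev[OF w] by (metis image_eqI)
  qed
qed

lemma v_minus_eq_wprod:
  assumes lam: "lam \<in> weight_lattice \<Phi>" and p: "p \<in> A" and w: "set w \<subseteq> {0..r}"
    and w_end: "wprod \<alpha> \<theta> (rev w) (p - lam) \<in> A"
  shows "v_minus \<Phi> \<alpha> r \<theta> lam = wprod \<alpha> \<theta> w"
  unfolding v_minus_def
proof (rule the_equality)
  have image: "wprod \<alpha> \<theta> w ` A = (\<lambda>x. x - lam) ` A"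
    using wprod_image_alcove[OF assms] .
  then show "wprod \<alpha> \<theta> w \<in> W_aff \<alpha> \<theta> r \<and> wprod \<alpha> \<theta> w ` A = (\<lambda>x. x - lam) ` A"
    using w by (auto simp: W_aff_def)
  fix v assume v: "v \<in> W_aff \<alpha> \<theta> r \<and> v ` A = (\<lambda>x. x - lam) ` A"
  then obtain w' where w': "v = wprod \<alpha> \<theta> w'" "set w' \<subseteq> {0..r}"
    by (auto simp: W_aff_def)
  have "v p \<in> wprod \<alpha> \<theta> w ` A"
    using v image p by blast
  then obtain y where y: "y \<in> A" "v p = wprod \<alpha> \<theta> w y"
    by blast
  have "wprod \<alpha> \<theta> (rev w @ w') p = y"
    using y(2) w'(1) wprod_rev_cancel[OF w] by (simp add: wprod_append)
  then have "wprod \<alpha> \<theta> (rev w @ w') = id"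
    using wprod_eq_id_if_alcove[of "rev w @ w'" p] w w'(2) p y(1) by simp
  then have "wprod \<alpha> \<theta> (rev w) (v x) = x" for x
    using w'(1) by (metis comp_apply id_apply wprod_append)
  then show "v = wprod \<alpha> \<theta> w"
    using wprod_cancel_rev[OF w] by (metis ext)
qed

section \<open>A generic starting point\<close>

lemma R_pairs_finite: "finite (R_pairs \<Phi> \<alpha> r lam)"
proof -
  define N where "N \<beta> = \<lceil>\<bar>pairing lam \<beta>\<bar>\<rceil>" for \<beta>
  have "R_pairs \<Phi> \<alpha> r lam \<subseteq> Sigma \<Phi> (\<lambda>\<beta>. {- N \<beta>..N \<beta>})"
  proof
    fix h assume h: "h \<in> R_pairs \<Phi> \<alpha> r lam"
    obtain \<beta> k where hk: "h = (\<beta>, k)"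
      by fastforce
    have "\<beta> \<in> \<Phi>"
      using h hk pos_roots_subset by (auto simp: R_pairs_def)
    moreover have "\<bar>of_int k\<bar> \<le> \<bar>pairing lam \<beta>\<bar>"
      using h hk by (auto simp: R_pairs_def)
    then have "\<bar>k\<bar> \<le> N \<beta>"
      unfolding N_def by (metis ceiling_mono ceiling_of_int of_int_abs)
    ultimately show "h \<in> Sigma \<Phi> (\<lambda>\<beta>. {- N \<beta>..N \<beta>})"
      using hk by auto
  qed
  moreover have "finite (Sigma \<Phi> (\<lambda>\<beta>. {- N \<beta>..N \<beta>}))"
    using finite_roots by (intro finite_SigmaI) auto
  ultimately show ?thesis
    using finite_subset by blast
qed

lemma hmap_eq:
  "hmap \<omega> r lam (\<beta>, k) = map (\<lambda>x. x / pairing lam \<beta>) (- of_int k # map (cocoord \<beta>) [1..<Suc r])"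
  by (simp add: hmap_def cocoord_def)

text \<open>The components of \<open>hmap\<close> after the first determine \<open>coroot \<beta>\<close> up to the factor
  \<open>pairing lam \<beta>\<close>, hence \<open>\<beta>\<close> itself; then the first component determines \<open>k\<close>.\<close>
lemma hmap_inj: "inj_on (hmap \<omega> r lam) (R_pairs \<Phi> \<alpha> r lam)"
proof (rule inj_onI)
  fix h1 h2 assume h1: "h1 \<in> R_pairs \<Phi> \<alpha> r lam" and h2: "h2 \<in> R_pairs \<Phi> \<alpha> r lam"
    and eq: "hmap \<omega> r lam h1 = hmap \<omega> r lam h2"
  obtain \<beta>1 k1 \<beta>2 k2 where h: "h1 = (\<beta>1, k1)" "h2 = (\<beta>2, k2)"
    by fastforce
  have \<beta>: "\<beta>1 \<in> P" "\<beta>2 \<in> P" and n: "pairing lam \<beta>1 \<noteq> 0" "pairing lam \<beta>2 \<noteq> 0"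
    using h1 h2 h by (auto simp: R_pairs_def)
  define q where "q = pairing lam \<beta>1 / pairing lam \<beta>2"
  have q: "q \<noteq> 0"
    using n by (simp add: q_def)
  have "cocoord \<beta>1 j = q * cocoord \<beta>2 j" if j: "j \<in> {1..r}" for j
  proof -
    obtain i where i: "j = Suc i" "i < r"
      using j by (cases j) auto
    then have "cocoord \<beta>1 j / pairing lam \<beta>1 = cocoord \<beta>2 j / pairing lam \<beta>2"
      using arg_cong[OF eq, of "\<lambda>xs. xs ! Suc i"] h by (simp add: hmap_eq nth_map del: upt_Suc)
    then show ?thesis
      using n by (simp add: q_def field_simps)
  qed
  then have "coroot \<beta>1 = q *\<^sub>R coroot \<beta>2"
    by (simp add: coroot_expand_cocoord[of \<beta>1] coroot_expand_cocoord[of \<beta>2] scaleR_sum_right)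
  then have "\<beta>1 = (1 / q) *\<^sub>R \<beta>2"
    using coroot_scaleR[OF q] coroot_coroot root_nonzero pos_roots_subset \<beta> by (metis subsetD)
  then have "\<beta>1 = \<beta>2"
    using pos_roots_parallel_eq[OF \<beta>] by blast
  moreover have "of_int k1 / pairing lam \<beta>1 = of_int k2 / pairing lam \<beta>2"
    using arg_cong[OF eq, of "\<lambda>xs. xs ! 0"] h by (simp add: hmap_eq)
  ultimately show "h1 = h2"
    using h n by simp
qed

lemma list_poly_hmap:
  "list_poly (hmap \<omega> r lam (\<beta>, k)) e = (- of_int k + e * (\<Sum>i<r. cocoord \<beta> (Suc i) * e ^ i)) / pairing lam \<beta>"
  using list_poly_map_upt[of "\<lambda>i. cocoord \<beta> i / pairing lam \<beta>" r e]
  by (simp add: hmap_eq list_poly_Cons comp_def sum_divide_distrib[symmetric] diff_divide_distrib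
      del: upt_Suc)

definition generic_point :: "real \<Rightarrow> 'a" where
  "generic_point e = (\<Sum>i<r. (e ^ Suc i) *\<^sub>R \<omega> (Suc i))"

lemma pairing_generic_point: "pairing (generic_point e) \<beta> = e * (\<Sum>i<r. cocoord \<beta> (Suc i) * e ^ i)"
  by (simp add: generic_point_def pairing_def inner_sum_left cocoord_def sum_distrib_left algebra_simps)

lemma crossing_time_generic_point: "crossing_time (generic_point e) lam h = list_poly (hmap \<omega> r lam h) e"
  by (cases h) (simp add: crossing_time_def list_poly_hmap pairing_generic_point)

lemma eventually_generic_point_pairing:
  assumes \<beta>: "\<beta> \<in> P"
  shows "eventually (\<lambda>e. 0 < pairing (generic_point e) \<beta> \<and> pairing (generic_point e) \<beta> < 1) (at_right 0)"
proof -
  have "((\<lambda>e. pairing (generic_point e) \<beta>) \<longlongrightarrow> 0 * (\<Sum>i<r. cocoord \<beta> (Suc i) * 0 ^ i)) (at_right 0)"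
    unfolding pairing_generic_point by (intro tendsto_intros)
  then have "eventually (\<lambda>e. pairing (generic_point e) \<beta> < 1) (at_right 0)"
    by (rule order_tendstoD(2)) simp
  moreover have "eventually (\<lambda>e. 0 < pairing (generic_point e) \<beta>) (at_right 0)"
    using eventually_at_right_less[of "0::real"]
  proof (rule eventually_mono)
    fix e :: real assume e: "0 < e"
    have "\<beta> \<in> \<Phi>"
      using \<beta> pos_roots_subset by auto
    then obtain j where j: "j \<in> {1..r}" "cocoord \<beta> j \<noteq> 0"
      using cocoord_nonzero[OF root_nonzero] by blast
    then obtain i where i: "j = Suc i" "i < r"
      by (cases j) auto
    have "0 < (\<Sum>i<r. cocoord \<beta> (Suc i) * e ^ i)"
    proof (rule sum_pos2[of "{..<r}" i])
      show "0 < cocoord \<beta> (Suc i) * e ^ i"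
        using pos_root_cocoord_nonneg[OF \<beta> j(1)] j(2) i(1) e by simp
      show "0 \<le> cocoord \<beta> (Suc k) * e ^ k" if "k \<in> {..<r}" for k
        using pos_root_cocoord_nonneg[OF \<beta>, of "Suc k"] that e by simp
    qed (use i in auto)
    then show "0 < pairing (generic_point e) \<beta>"
      using e by (simp add: pairing_generic_point)
  qed
  ultimately show ?thesis
    by (auto intro: eventually_conj)
qed

lemma generic_alcove_point:
  obtains p where "p \<in> A"
    "\<And>h h'. h \<in> R_pairs \<Phi> \<alpha> r lam \<Longrightarrow> h' \<in> R_pairs \<Phi> \<alpha> r lam \<Longrightarrow>
       lex_less (hmap \<omega> r lam h) (hmap \<omega> r lam h') \<Longrightarrow> crossing_time p lam h < crossing_time p lam h'"
proof -
  let ?R = "R_pairs \<Phi> \<alpha> r lam"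
  have "eventually (\<lambda>e. \<forall>(h, h')\<in>?R \<times> ?R. lex_less (hmap \<omega> r lam h) (hmap \<omega> r lam h') \<longrightarrow>
      list_poly (hmap \<omega> r lam h) e < list_poly (hmap \<omega> r lam h') e) (at_right 0)"
    using R_pairs_finite list_poly_lexord_eventually_less
    by (intro eventually_ball_finite) (auto simp: lex_less_def hmap_def split: prod.splits)
  moreover have "eventually (\<lambda>e. \<forall>\<beta>\<in>P. 0 < pairing (generic_point e) \<beta> \<and> pairing (generic_point e) \<beta> < 1)
      (at_right 0)"
    using finite_subset[OF pos_roots_subset finite_roots] eventually_generic_point_pairing
    by (intro eventually_ball_finite) auto
  ultimately have "eventually (\<lambda>e. (\<forall>(h, h')\<in>?R \<times> ?R. lex_less (hmap \<omega> r lam h) (hmap \<omega> r lam h') \<longrightarrow>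
      list_poly (hmap \<omega> r lam h) e < list_poly (hmap \<omega> r lam h') e) \<and>
      (\<forall>\<beta>\<in>P. 0 < pairing (generic_point e) \<beta> \<and> pairing (generic_point e) \<beta> < 1)) (at_right 0)"
    by (rule eventually_conj)
  then obtain e where e: "\<forall>(h, h')\<in>?R \<times> ?R. lex_less (hmap \<omega> r lam h) (hmap \<omega> r lam h') \<longrightarrow>
      list_poly (hmap \<omega> r lam h) e < list_poly (hmap \<omega> r lam h') e"
    "\<forall>\<beta>\<in>P. 0 < pairing (generic_point e) \<beta> \<and> pairing (generic_point e) \<beta> < 1"
    using eventually_happens'[OF trivial_limit_at_right_real] by blast
  show thesis
  proof (rule that)
    show "generic_point e \<in> A"
      using e(2) by (simp add: fund_alcove_def)
    show "crossing_time (generic_point e) lam h < crossing_time (generic_point e) lam h'"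
      if "h \<in> ?R" "h' \<in> ?R" "lex_less (hmap \<omega> r lam h) (hmap \<omega> r lam h')" for h h'
      using e(1) that by (auto simp: crossing_time_generic_point)
  qed
qed

end

section \<open>The straight-line walk\<close>

locale alcove_walk = based_root_system +
  fixes lam p :: 'a and ps :: "('a \<times> int) list"
  assumes lam_weight: "lam \<in> weight_lattice \<Phi>"
    and p_alcove: "p \<in> A"
    and set_ps: "set ps = R_pairs \<Phi> \<alpha> r lam"
    and sorted_ps: "sorted_wrt (\<lambda>h h'. crossing_time p lam h < crossing_time p lam h') ps"
begin

definition walk :: "real \<Rightarrow> 'a" where
  "walk t = p - t *\<^sub>R lam"

abbreviation "l \<equiv> length ps"

text \<open>\<open>tau (Suc j)\<close> is the time at which the walk crosses the wall \<open>ps ! j\<close>.\<close>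
definition tau :: "nat \<Rightarrow> real" where
  "tau j = (if j = 0 then 0 else if j \<le> l then crossing_time p lam (ps ! (j - 1)) else 1)"

lemma tau_0 [simp]: "tau 0 = 0"
  by (simp add: tau_def)

lemma tau_last [simp]: "tau (Suc l) = 1"
  by (simp add: tau_def)

lemma pairing_walk: "pairing (walk t) \<beta> = pairing p \<beta> - t * pairing lam \<beta>"
  by (simp add: walk_def pairing_diff_left pairing_scaleR_left)

lemma ps_in_R_pairs: "j < l \<Longrightarrow> ps ! j \<in> R_pairs \<Phi> \<alpha> r lam"
  using set_ps nth_mem by blast

lemma ps_crossing_time:
  assumes "j < l"
  shows "0 < crossing_time p lam (ps ! j)" "crossing_time p lam (ps ! j) < 1"
  using R_pairs_crossing_time(4,5)[OF p_alcove lam_weight, of "fst (ps ! j)" "snd (ps ! j)"]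
    ps_in_R_pairs[OF assms] by simp_all

lemma walk_hits_ps:
  assumes j: "j < l"
  shows "pairing (walk (tau (Suc j))) (fst (ps ! j)) = of_int (snd (ps ! j))"
  using pairing_crossing_time[of lam "fst (ps ! j)" p "snd (ps ! j)"] j
    R_pairs_crossing_time(2)[OF p_alcove lam_weight, of "fst (ps ! j)" "snd (ps ! j)"] ps_in_R_pairs[OF j]
  by (simp add: walk_def tau_def)

lemma tau_strict_mono: "i < j \<Longrightarrow> j \<le> Suc l \<Longrightarrow> tau i < tau j"
  using sorted_wrt_nth_less[OF sorted_ps, of "i - 1" "j - 1"] ps_crossing_time[of "i - 1"]
    ps_crossing_time[of "j - 1"]
  by (auto simp: tau_def)

lemma tau_inject: "i \<le> Suc l \<Longrightarrow> j \<le> Suc l \<Longrightarrow> tau i = tau j \<Longrightarrow> i = j"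
  using tau_strict_mono[of i j] tau_strict_mono[of j i] by (cases i j rule: linorder_cases) auto

lemma tau_bounds: "j \<le> Suc l \<Longrightarrow> 0 \<le> tau j \<and> tau j \<le> 1"
  using tau_strict_mono[of 0 j] tau_strict_mono[of j "Suc l"]
  by (cases "j = 0"; cases "j = Suc l") (auto simp: tau_def)

lemma walk_hit_time:
  assumes t: "0 < t" "t \<le> 1" and \<gamma>: "\<gamma> \<in> \<Phi>" and hit: "pairing (walk t) \<gamma> = of_int m"
  obtains j where "j < l" "t = tau (Suc j)" "ps ! j = (\<gamma>, m) \<or> ps ! j = (- \<gamma>, - m)"
proof -
  obtain \<beta> k where \<beta>: "\<beta> \<in> P" "pairing (walk t) \<beta> = of_int k" "(\<beta>, k) = (\<gamma>, m) \<or> (\<beta>, k) = (- \<gamma>, - m)"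
    using pos_root_or_uminus[OF \<gamma>] hit by (metis pairing_minus_right of_int_minus)
  then have "(\<beta>, k) \<in> set ps" "t = crossing_time p lam (\<beta>, k)"
    using wall_hit_in_R_pairs[OF p_alcove lam_weight \<beta>(1) t] set_ps by (simp_all add: walk_def)
  then obtain j where "j < l" "ps ! j = (\<beta>, k)"
    by (metis in_set_conv_nth)
  then show thesis
    using that \<beta>(3) \<open>t = crossing_time p lam (\<beta>, k)\<close> by (simp add: tau_def)
qed

lemma walk_regular:
  assumes "a \<le> l" "tau a < t" "t < tau (Suc a)"
  shows "regular (walk t)"
  unfolding regular_def
proof (intro ballI allI notI)
  fix \<gamma> m assume "\<gamma> \<in> \<Phi>" "pairing (walk t) \<gamma> = of_int m"
  moreover have "0 < t" "t \<le> 1"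
    using tau_bounds[of a] tau_bounds[of "Suc a"] assms by auto
  ultimately obtain j where "j < l" "t = tau (Suc j)"
    using walk_hit_time by metis
  moreover from this have "\<not> Suc j < a" "a \<noteq> Suc j" "\<not> Suc a < Suc j" "a \<noteq> j"
    using assms tau_strict_mono[of "Suc j" a] tau_strict_mono[of "Suc a" "Suc j"] by auto
  ultimately show False
    by linarith
qed

lemma wprod_walk_affine:
  assumes "set u \<subseteq> {0..r}"
  obtains C D where "\<And>t. pairing (wprod \<alpha> \<theta> u (walk t)) \<beta> = C + t * D"
proof
  let ?L = "wbarprod \<alpha> \<theta> u" and ?c = "wprod \<alpha> \<theta> u 0"
  have g: "root_affine (wprod \<alpha> \<theta> u) ?L ?c"
    using root_affine_wprod[OF assms] .
  then have "linear ?L"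
    by (simp add: root_affine_def orthogonal_transformation_def)
  then show "pairing (wprod \<alpha> \<theta> u (walk t)) \<beta> = pairing (?L p + ?c) \<beta> + t * - pairing (?L lam) \<beta>" for t
    using root_affine_apply[OF g, of "walk t"]
    by (simp add: walk_def linear_diff linear_scale pairing_add_left pairing_diff_left pairing_scaleR_left)
qed

lemma walk_end_regular: "regular (walk 1)"
  unfolding regular_def
proof (intro ballI allI notI)
  fix \<gamma> m assume "\<gamma> \<in> \<Phi>" "pairing (walk 1) \<gamma> = of_int m"
  then obtain j where "j < l" "1 = tau (Suc j)"
    using walk_hit_time by (metis order.refl zero_less_one)
  then show False
    using ps_crossing_time(2)[of j] by (simp add: tau_def)
qed

end

locale alcove_walk_step = alcove_walk +
  fixes a :: nat and w :: "nat list"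
  assumes a_less: "a < l" and w_gens: "set w \<subseteq> {0..r}"
    and in_alcove: "\<And>t. tau a < t \<Longrightarrow> t < tau (Suc a) \<Longrightarrow> wprod \<alpha> \<theta> (rev w) (walk t) \<in> A"
begin

definition pulled_walk :: "real \<Rightarrow> 'a" where
  "pulled_walk t = wprod \<alpha> \<theta> (rev w) (walk t)"

definition crossing_point :: 'a where
  "crossing_point = pulled_walk (tau (Suc a))"

abbreviation "L \<equiv> wbarprod \<alpha> \<theta> w"
abbreviation "c \<equiv> wprod \<alpha> \<theta> w 0"

lemma root_affine_w: "root_affine (wprod \<alpha> \<theta> w) L c"
  using root_affine_wprod[OF w_gens] .

lemma wprod_pulled_walk: "wprod \<alpha> \<theta> w (pulled_walk t) = walk t"
  by (simp add: pulled_walk_def wprod_cancel_rev[OF w_gens])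

lemma tau_a: "tau a < tau (Suc a)" "tau (Suc a) < tau (Suc (Suc a))"
  using tau_strict_mono a_less by simp_all

lemma crossing_point_closed_alcove:
  assumes \<beta>: "\<beta> \<in> P"
  shows "0 \<le> pairing crossing_point \<beta> \<and> pairing crossing_point \<beta> \<le> 1"
proof -
  obtain C D where CD: "\<And>t. pairing (pulled_walk t) \<beta> = C + t * D"
    using wprod_walk_affine[of "rev w" \<beta>] w_gens unfolding pulled_walk_def by auto
  have "0 < C + s * D \<and> C + s * D < 1" if "tau a < s" "s < tau (Suc a)" for s
    using alcove_pairing[OF in_alcove[OF that] \<beta>] CD[of s] by (simp add: pulled_walk_def)
  then show ?thesis
    using affine_limit_in_unit_interval[OF tau_a(1)] CD by (simp add: crossing_point_def)
qed

lemma crossing_point_on_wall: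
  assumes \<gamma>: "\<gamma> \<in> \<Phi>" and hit: "pairing crossing_point \<gamma> = of_int m"
  shows "(L \<gamma> = fst (ps ! a) \<and> of_int m + pairing c (L \<gamma>) = of_int (snd (ps ! a))) \<or>
    (L \<gamma> = - fst (ps ! a) \<and> of_int m + pairing c (L \<gamma>) = - of_int (snd (ps ! a)))"
proof -
  have L\<gamma>: "L \<gamma> \<in> \<Phi>"
    using root_affine_w \<gamma> by (auto simp: root_affine_def)
  obtain mc :: int where mc: "pairing c (L \<gamma>) = of_int mc"
    using root_affine_pairing_Ints[OF root_affine_w L\<gamma>] by (auto elim: Ints_cases)
  have "pairing (walk (tau (Suc a))) (L \<gamma>) = of_int (m + mc)"
    using root_affine_pairing[OF root_affine_w, of crossing_point \<gamma>] wprod_pulled_walk hit mc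
    by (simp add: crossing_point_def)
  moreover have "0 < tau (Suc a)" "tau (Suc a) \<le> 1"
    using tau_bounds[of "Suc a"] tau_a a_less tau_bounds[of a] by auto
  ultimately obtain j where j: "j < l" "tau (Suc a) = tau (Suc j)"
    "ps ! j = (L \<gamma>, m + mc) \<or> ps ! j = (- L \<gamma>, - (m + mc))"
    using walk_hit_time[OF _ _ L\<gamma>] by metis
  have "j = a"
    using tau_inject[of "Suc a" "Suc j"] j(1,2) a_less by simp
  then show ?thesis
    using j(3) mc by auto
qed

lemma crossing_point_unique_wall:
  assumes "\<gamma> \<in> P" "\<gamma>' \<in> P" "pairing crossing_point \<gamma> = of_int m" "pairing crossing_point \<gamma>' = of_int m'"
  shows "\<gamma> = \<gamma>'"
proof -
  have \<Phi>: "\<gamma> \<in> \<Phi>" "\<gamma>' \<in> \<Phi>"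
    using assms(1,2) pos_roots_subset by auto
  have L: "inj L" "linear L"
    using root_affine_w orthogonal_transformation_inj
    by (auto simp: root_affine_def orthogonal_transformation_def)
  have "L \<gamma> = L \<gamma>' \<or> L \<gamma> = L (- \<gamma>')"
    using crossing_point_on_wall[OF \<Phi>(1) assms(3)] crossing_point_on_wall[OF \<Phi>(2) assms(4)]
      linear_neg[OF L(2)] by auto
  then have "\<gamma> = \<gamma>' \<or> \<gamma> = - \<gamma>'"
    using L(1) by (auto dest: injD)
  then show ?thesis
    using pos_root_uminus_notin assms(1,2) by auto
qed

lemma crossing_point_on_alcove_wall:
  obtains i where "i \<in> {0..r}" "pairing crossing_point (wall_root i) = of_int (wall_const i)"
proof -
  let ?\<beta> = "fst (ps ! a)" and ?k = "snd (ps ! a)"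
  have \<beta>: "?\<beta> \<in> \<Phi>"
    using R_pairs_crossing_time(1)[OF p_alcove lam_weight] ps_in_R_pairs[OF a_less] pos_roots_subset
    by (metis prod.collapse subsetD)
  then have "?\<beta> \<in> L ` \<Phi>"
    using root_affine_image[OF root_affine_w] by simp
  then obtain \<gamma> where \<gamma>: "\<gamma> \<in> \<Phi>" "L \<gamma> = ?\<beta>"
    by auto
  obtain mc :: int where mc: "pairing c ?\<beta> = of_int mc"
    using root_affine_pairing_Ints[OF root_affine_w \<beta>] by (auto elim: Ints_cases)
  have "pairing (walk (tau (Suc a))) ?\<beta> = of_int ?k"
    using walk_hits_ps[OF a_less] .
  then have hit: "pairing crossing_point \<gamma> = of_int (?k - mc)"
    using root_affine_pairing[OF root_affine_w, of crossing_point \<gamma>] wprod_pulled_walk \<gamma>(2) mc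
    by (simp add: crossing_point_def)
  show thesis
  proof (cases "\<gamma> \<in> P")
    case True
    then show thesis
      using closed_alcove_on_wall[OF crossing_point_closed_alcove True hit] that by blast
  next
    case False
    then have "- \<gamma> \<in> P" "pairing crossing_point (- \<gamma>) = of_int (mc - ?k)"
      using pos_root_or_uminus[OF \<gamma>(1)] hit by (auto simp: pairing_minus_right)
    then show thesis
      using closed_alcove_on_wall[OF crossing_point_closed_alcove] that by blast
  qed
qed

lemma crossing_conjugates:
  assumes i: "i \<in> {0..r}" and zi: "pairing crossing_point (wall_root i) = of_int (wall_const i)"
  shows "wprod \<alpha> \<theta> w \<circ> sgen \<alpha> \<theta> i = saff (fst (ps ! a)) (of_int (snd (ps ! a))) \<circ> wprod \<alpha> \<theta> w"
proof -
  have "wall_root i \<in> \<Phi>"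
    using wall_root_pos[OF i] pos_roots_subset by auto
  then have "saff (L (wall_root i)) (of_int (wall_const i) + pairing c (L (wall_root i))) =
      saff (fst (ps ! a)) (of_int (snd (ps ! a)))"
    using crossing_point_on_wall[OF _ zi] saff_minus[of "fst (ps ! a)" "of_int (snd (ps ! a))"] by auto
  then show ?thesis
    using root_affine_comp_sgen[OF root_affine_w i] by simp
qed

lemma crossing_root:
  assumes i: "i \<in> {0..r}" and zi: "pairing crossing_point (wall_root i) = of_int (wall_const i)"
  shows "L (root_idx \<alpha> \<theta> i) = bmap (ps ! a)"
proof -
  let ?\<rho> = "root_idx \<alpha> \<theta> i" and ?m = "if i = 0 then -1 else 0 :: int"
  let ?\<beta> = "fst (ps ! a)" and ?k = "snd (ps ! a)"
  have \<rho>: "?\<rho> \<in> \<Phi>"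
    using i by (auto simp: root_idx_def roots_uminus_closed highest_root_in_roots simple_root_in_roots)
  have crossing_point\<rho>: "pairing crossing_point ?\<rho> = of_int ?m"
    using zi
    by (cases "i = 0") (simp_all add: root_idx_def wall_root_def wall_const_def pairing_minus_right)
  define s where "s = (tau a + tau (Suc a)) / 2"
  have s: "tau a < s" "s < tau (Suc a)"
    using tau_a by (auto simp: s_def)
  have "of_int ?m < pairing (pulled_walk s) ?\<rho>"
    using alcove_lower_bound[OF in_alcove[OF s] i] by (simp add: pulled_walk_def)
  then have above: "of_int ?m + pairing c (L ?\<rho>) < pairing (walk s) (L ?\<rho>)"
    using root_affine_pairing[OF root_affine_w, of "pulled_walk s" ?\<rho>] wprod_pulled_walk by simp
  have lam\<beta>: "pairing (walk s) ?\<beta> - of_int ?k = (tau (Suc a) - s) * pairing lam ?\<beta>"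
    using walk_hits_ps[OF a_less] by (simp add: pairing_walk algebra_simps)
  have R: "0 < pairing lam ?\<beta> \<longleftrightarrow> ?k \<le> 0"
    using R_pairs_crossing_time(3)[OF p_alcove lam_weight, of ?\<beta> ?k] ps_in_R_pairs[OF a_less] by simp
  from crossing_point_on_wall[OF \<rho> crossing_point\<rho>] show ?thesis
  proof
    assume h: "L ?\<rho> = ?\<beta> \<and> of_int ?m + pairing c (L ?\<rho>) = of_int ?k"
    then have "0 < (tau (Suc a) - s) * pairing lam ?\<beta>"
      using above lam\<beta> by (metis diff_gt_0_iff_gt)
    then have "0 < pairing lam ?\<beta>"
      using s by (simp add: zero_less_mult_iff)
    then show ?thesis
      using h R by (simp add: bmap_def case_prod_beta)
  next
    assume h: "L ?\<rho> = - ?\<beta> \<and> of_int ?m + pairing c (L ?\<rho>) = - of_int ?k"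
    then have "pairing (walk s) ?\<beta> < of_int ?k"
      using above by (metis neg_less_iff_less pairing_minus_right)
    then have "(tau (Suc a) - s) * pairing lam ?\<beta> < 0"
      using lam\<beta> by linarith
    then have "pairing lam ?\<beta> < 0"
      using s by (simp add: mult_less_0_iff)
    then show ?thesis
      using h R by (simp add: bmap_def case_prod_beta)
  qed
qed

lemma sgen_crossing_point:
  "pairing crossing_point (wall_root i) = of_int (wall_const i) \<Longrightarrow>
    sgen \<alpha> \<theta> i crossing_point = crossing_point"
  by (simp add: sgen_eq_wall_reflection saff_fixpoint)

text \<open>Before the crossing the walk lies on the side of the crossed wall containing \<open>A\<close>.\<close>
lemma crossing_direction:
  assumes i: "i \<in> {0..r}" and zi: "pairing crossing_point (wall_root i) = of_int (wall_const i)"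
    and CD: "\<And>s. pairing (pulled_walk s) (wall_root i) = C + s * D"
  shows "C + tau (Suc a) * D = of_int (wall_const i)" and "if i = 0 then 0 < D else D < 0"
proof -
  show at_crossing: "C + tau (Suc a) * D = of_int (wall_const i)"
    using CD[of "tau (Suc a)"] zi by (simp add: crossing_point_def)
  define s where "s = (tau a + tau (Suc a)) / 2"
  have s: "tau a < s" "s < tau (Suc a)"
    using tau_a by (auto simp: s_def)
  have "0 < C + s * D" "C + s * D < 1"
    using alcove_pairing[OF in_alcove[OF s] wall_root_pos[OF i]] CD[of s] by (simp_all add: pulled_walk_def)
  then have "if i = 0 then 0 < (tau (Suc a) - s) * D else (tau (Suc a) - s) * D < 0"
    using at_crossing by (cases "i = 0") (simp_all add: wall_const_def algebra_simps)
  then show "if i = 0 then 0 < D else D < 0"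
    using s by (simp add: zero_less_mult_iff mult_less_0_iff split: if_splits)
qed

text \<open>Just after the crossing, the reflected walk enters the closed alcove through its interior or
  through the wall it has just crossed, moving inwards.\<close>
lemma reflected_walk_enters:
  assumes i: "i \<in> {0..r}" and zi: "pairing crossing_point (wall_root i) = of_int (wall_const i)"
    and \<beta>: "\<beta> \<in> P"
    and CD: "\<And>s. pairing (sgen \<alpha> \<theta> i (pulled_walk s)) \<beta> = C + s * D"
  shows "(0 < C + tau (Suc a) * D \<and> C + tau (Suc a) * D < 1) \<or>
    (C + tau (Suc a) * D = 0 \<and> D > 0) \<or> (C + tau (Suc a) * D = 1 \<and> D < 0)"
proof (cases "\<beta> = wall_root i")
  case False
  have at_crossing: "C + tau (Suc a) * D = pairing crossing_point \<beta>"
    using CD[of "tau (Suc a)"] sgen_crossing_point[OF zi] by (simp add: crossing_point_def)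
  have "pairing crossing_point \<beta> \<noteq> of_int 0" "pairing crossing_point \<beta> \<noteq> of_int 1"
    using crossing_point_unique_wall[OF \<beta> wall_root_pos[OF i] _ zi] False by blast+
  then show ?thesis
    using crossing_point_closed_alcove[OF \<beta>] at_crossing by auto
next
  case True
  obtain C' D' where CD': "\<And>s. pairing (pulled_walk s) \<beta> = C' + s * D'"
    using wprod_walk_affine[of "rev w" \<beta>] w_gens unfolding pulled_walk_def by auto
  have "pairing (sgen \<alpha> \<theta> i y) \<beta> = 2 * of_int (wall_const i) - pairing y \<beta>" for y
    using pairing_saff_self[OF wall_root_nonzero[OF i]] True by (simp add: sgen_eq_wall_reflection)
  then have "C + s * D = 2 * of_int (wall_const i) - (C' + s * D')" for s
    using CD CD' by metis
  from this[of 0] this[of 1] have "C = 2 * of_int (wall_const i) - C'" "D = - D'"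
    by simp_all
  then show ?thesis
    using crossing_direction[OF i zi CD'[unfolded True]]
    by (cases "i = 0") (simp_all add: wall_const_def algebra_simps)
qed

lemma crossing_next_alcove:
  assumes i: "i \<in> {0..r}" and zi: "pairing crossing_point (wall_root i) = of_int (wall_const i)"
    and t: "tau (Suc a) < t" "t < tau (Suc (Suc a))"
  shows "sgen \<alpha> \<theta> i (pulled_walk t) \<in> A"
  unfolding fund_alcove_def
proof (intro CollectI ballI)
  fix \<beta> assume \<beta>: "\<beta> \<in> P"
  have gens: "set (rev (w @ [i])) \<subseteq> {0..r}"
    using w_gens i by auto
  have word: "sgen \<alpha> \<theta> i (pulled_walk s) = wprod \<alpha> \<theta> (rev (w @ [i])) (walk s)" for s
    by (simp add: pulled_walk_def wprod_Cons)
  obtain C D where CD: "\<And>s. pairing (sgen \<alpha> \<theta> i (pulled_walk s)) \<beta> = C + s * D"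
    using wprod_walk_affine[OF gens, of \<beta>] word by metis
  have avoid: "C + s * D \<noteq> 0 \<and> C + s * D \<noteq> 1" if "tau (Suc a) < s" "s < tau (Suc (Suc a))" for s
  proof -
    have "regular (sgen \<alpha> \<theta> i (pulled_walk s))"
      using root_affine_regular[OF root_affine_wprod[OF gens] walk_regular[of "Suc a" s]] that a_less word
      by simp
    then show ?thesis
      using CD[of s] regular_pairing_neq_01[OF _ \<beta>] by metis
  qed
  obtain s0 where "tau (Suc a) < s0" "s0 < tau (Suc (Suc a))" "0 < C + s0 * D" "C + s0 * D < 1"
    using affine_enters_unit_interval[OF tau_a(2) reflected_walk_enters[OF i zi \<beta> CD]] by blast
  then show "0 < pairing (sgen \<alpha> \<theta> i (pulled_walk t)) \<beta> \<and> pairing (sgen \<alpha> \<theta> i (pulled_walk t)) \<beta> < 1"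
    using affine_stays_in_unit_interval[of "tau (Suc a)" s0 "tau (Suc (Suc a))" C D t] avoid t CD[of t]
    by simp
qed

lemma walk_step:
  obtains i where "i \<in> {0..r}"
    "wprod \<alpha> \<theta> w \<circ> sgen \<alpha> \<theta> i = saff (fst (ps ! a)) (of_int (snd (ps ! a))) \<circ> wprod \<alpha> \<theta> w"
    "wbarprod \<alpha> \<theta> w (root_idx \<alpha> \<theta> i) = bmap (ps ! a)"
    "\<And>t. tau (Suc a) < t \<Longrightarrow> t < tau (Suc (Suc a)) \<Longrightarrow> wprod \<alpha> \<theta> (rev (w @ [i])) (walk t) \<in> A"
proof -
  obtain i where i: "i \<in> {0..r}" "pairing crossing_point (wall_root i) = of_int (wall_const i)"
    by (rule crossing_point_on_alcove_wall)
  show thesis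
    using that[OF i(1) crossing_conjugates[OF i] crossing_root[OF i]] crossing_next_alcove[OF i]
    by (simp add: pulled_walk_def wprod_Cons)
qed

end

context alcove_walk
begin

definition realises :: "nat list \<Rightarrow> nat \<Rightarrow> bool" where
  "realises w j \<longleftrightarrow>
     wprod \<alpha> \<theta> (take j w) \<circ> sgen \<alpha> \<theta> (w ! j) =
       saff (fst (ps ! j)) (of_int (snd (ps ! j))) \<circ> wprod \<alpha> \<theta> (take j w) \<and>
     wbarprod \<alpha> \<theta> (take j w) (root_idx \<alpha> \<theta> (w ! j)) = bmap (ps ! j)"

lemma walk_start_in_alcove:
  assumes "0 < t" "t < tau 1"
  shows "walk t \<in> A"
  unfolding fund_alcove_def
proof (intro CollectI ballI)
  fix \<beta> assume \<beta>: "\<beta> \<in> P"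
  let ?C = "pairing p \<beta>" and ?D = "- pairing lam \<beta>"
  have CD: "pairing (walk s) \<beta> = ?C + s * ?D" for s
    by (simp add: pairing_walk)
  have "0 < tau 1"
    using tau_strict_mono[of 0 1] by simp
  moreover have
    "(0 < ?C + 0 * ?D \<and> ?C + 0 * ?D < 1) \<or> (?C + 0 * ?D = 0 \<and> ?D > 0) \<or> (?C + 0 * ?D = 1 \<and> ?D < 0)"
    using alcove_pairing[OF p_alcove \<beta>] by simp
  ultimately obtain s0 where s0: "0 < s0" "s0 < tau 1" "0 < ?C + s0 * ?D" "?C + s0 * ?D < 1"
    using affine_enters_unit_interval by blast
  have "?C + s * ?D \<noteq> 0 \<and> ?C + s * ?D \<noteq> 1" if "0 < s" "s < tau 1" for s
    using regular_pairing_neq_01[OF walk_regular[of 0 s] \<beta>] that CD[of s] by simp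
  then show "0 < pairing (walk t) \<beta> \<and> pairing (walk t) \<beta> < 1"
    using affine_stays_in_unit_interval[OF s0(1,2) s0(3,4) _ assms] CD by simp
qed

lemma walk_prefix_word:
  assumes "a \<le> l"
  obtains w where "length w = a" "set w \<subseteq> {0..r}" "\<And>j. j < a \<Longrightarrow> realises w j"
    "\<And>t. tau a < t \<Longrightarrow> t < tau (Suc a) \<Longrightarrow> wprod \<alpha> \<theta> (rev w) (walk t) \<in> A"
  using assms
proof (induction a arbitrary: thesis)
  case 0
  show ?case
    by (rule "0.prems"(1)[of "[]"]) (simp_all add: walk_start_in_alcove tau_def)
next
  case (Suc a)
  obtain w where w: "length w = a" "set w \<subseteq> {0..r}" "\<And>j. j < a \<Longrightarrow> realises w j"
    "\<And>t. tau a < t \<Longrightarrow> t < tau (Suc a) \<Longrightarrow> wprod \<alpha> \<theta> (rev w) (walk t) \<in> A"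
    using Suc.IH Suc.prems(2) by (metis Suc_leD)
  interpret alcove_walk_step \<Phi> \<alpha> \<omega> r \<theta> lam p ps a w
    using w(2,4) Suc.prems(2) by unfold_locales auto
  obtain i where i: "i \<in> {0..r}"
    "wprod \<alpha> \<theta> w \<circ> sgen \<alpha> \<theta> i = saff (fst (ps ! a)) (of_int (snd (ps ! a))) \<circ> wprod \<alpha> \<theta> w"
    "wbarprod \<alpha> \<theta> w (root_idx \<alpha> \<theta> i) = bmap (ps ! a)"
    "\<And>t. tau (Suc a) < t \<Longrightarrow> t < tau (Suc (Suc a)) \<Longrightarrow> wprod \<alpha> \<theta> (rev (w @ [i])) (walk t) \<in> A"
    by (rule walk_step) blast
  have "realises (w @ [i]) j" if "j < Suc a" for j
  proof (cases "j < a")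
    case True
    then show ?thesis
      using w(1,3) by (simp add: realises_def nth_append)
  next
    case False
    then have "j = a"
      using that by simp
    then show ?thesis
      using i(2,3) w(1) by (simp add: realises_def nth_append)
  qed
  then show ?case
    using Suc.prems(1)[of "w @ [i]"] w(1,2) i(1,4) by simp
qed

lemma walk_word:
  obtains w where "length w = l" "set w \<subseteq> {0..r}" "\<And>j. j < l \<Longrightarrow> realises w j"
    "wprod \<alpha> \<theta> (rev w) (p - lam) \<in> A"
proof -
  obtain w where w: "length w = l" "set w \<subseteq> {0..r}" "\<And>j. j < l \<Longrightarrow> realises w j"
    and inside: "\<And>t. tau l < t \<Longrightarrow> t < tau (Suc l) \<Longrightarrow> wprod \<alpha> \<theta> (rev w) (walk t) \<in> A"
    by (rule walk_prefix_word[OF order.refl]) blast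
  have gens: "set (rev w) \<subseteq> {0..r}"
    using w(2) by simp
  have "wprod \<alpha> \<theta> (rev w) (walk 1) \<in> A"
    unfolding fund_alcove_def
  proof (intro CollectI ballI)
    fix \<beta> assume \<beta>: "\<beta> \<in> P"
    obtain C D where CD: "\<And>t. pairing (wprod \<alpha> \<theta> (rev w) (walk t)) \<beta> = C + t * D"
      using wprod_walk_affine[OF gens] by blast
    have "0 < C + s * D \<and> C + s * D < 1" if "tau l < s" "s < 1" for s
      using alcove_pairing[OF inside[of s] \<beta>] that CD[of s] by simp
    then have "0 \<le> C + 1 * D \<and> C + 1 * D \<le> 1"
      using affine_limit_in_unit_interval[of "tau l" 1] tau_strict_mono[of l "Suc l"] by simp
    moreover have "regular (wprod \<alpha> \<theta> (rev w) (walk 1))"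
      using root_affine_regular[OF root_affine_wprod[OF gens] walk_end_regular] .
    then have "C + 1 * D \<noteq> 0" "C + 1 * D \<noteq> 1"
      using CD[of 1] regular_pairing_neq_01[OF _ \<beta>] by metis+
    ultimately show
      "0 < pairing (wprod \<alpha> \<theta> (rev w) (walk 1)) \<beta> \<and> pairing (wprod \<alpha> \<theta> (rev w) (walk 1)) \<beta> < 1"
      using CD[of 1] by auto
  qed
  then show thesis
    using that w by (simp add: walk_def)
qed


lemma distinct_ps: "distinct ps"
proof -
  have "sorted_wrt (<) (map (crossing_time p lam) ps)"
    using sorted_ps by (simp add: sorted_wrt_map)
  then show ?thesis
    by (simp add: strict_sorted_iff distinct_map)
qed

lemma chain_refl_realises:
  assumes len: "length w = l" and w: "set w \<subseteq> {0..r}" and chain: "\<And>j. j < l \<Longrightarrow> realises w j"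
  shows "chain_refl \<alpha> \<theta> w = map (\<lambda>(\<beta>, k). saff \<beta> (of_int k)) ps"
proof (rule nth_equalityI)
  fix j assume "j < length (chain_refl \<alpha> \<theta> w)"
  then have j: "j < l"
    using len by (simp add: chain_refl_def)
  have "set (take j w) \<subseteq> {0..r}"
    using w by (meson order_trans set_take_subset)
  then have "wprod \<alpha> \<theta> (take (Suc j) w @ rev (take j w)) = saff (fst (ps ! j)) (of_int (snd (ps ! j)))"
    using chain[OF j] j len wprod_cancel_rev
    by (simp add: realises_def wprod_append wprod_take_Suc fun_eq_iff)
  then show "chain_refl \<alpha> \<theta> w ! j = map (\<lambda>(\<beta>, k). saff \<beta> (of_int k)) ps ! j"
    using j len by (simp add: chain_refl_def case_prod_beta)
qed (simp add: chain_refl_def len)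

lemma chain_roots_realises:
  assumes "length w = l" and "\<And>j. j < l \<Longrightarrow> realises w j"
  shows "chain_roots \<alpha> \<theta> w = map bmap ps"
  using assms by (intro nth_equalityI) (simp_all add: chain_roots_def realises_def)

lemma lambda_chain:
  obtains w where "reduced_decomp \<alpha> \<theta> r (v_minus \<Phi> \<alpha> r \<theta> lam) w"
    "chain_refl \<alpha> \<theta> w = map (\<lambda>(\<beta>, k). saff \<beta> (of_int k)) ps"
    "chain_roots \<alpha> \<theta> w = map bmap ps"
proof -
  obtain w where len: "length w = l" and w: "set w \<subseteq> {0..r}" and chain: "\<And>j. j < l \<Longrightarrow> realises w j"
    and w_end: "wprod \<alpha> \<theta> (rev w) (p - lam) \<in> A"
    by (rule walk_word) blast
  have V: "v_minus \<Phi> \<alpha> r \<theta> lam = wprod \<alpha> \<theta> w"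
    using v_minus_eq_wprod[OF lam_weight p_alcove w w_end] .
  have "wprod \<alpha> \<theta> w p \<in> (\<lambda>x. x - lam) ` A"
    using wprod_image_alcove[OF lam_weight p_alcove w w_end] p_alcove by blast
  then have walls: "separating_walls (wprod \<alpha> \<theta> w p) = R_pairs \<Phi> \<alpha> r lam"
    using separating_walls_translate[OF lam_weight] by auto
  have card: "card (R_pairs \<Phi> \<alpha> r lam) = length w"
    using distinct_card[OF distinct_ps] set_ps len by simp
  have "reduced_decomp \<alpha> \<theta> r (v_minus \<Phi> \<alpha> r \<theta> lam) w"
    unfolding reduced_decomp_def V
  proof (intro conjI allI impI w refl)
    fix w' assume w': "set w' \<subseteq> {0..r} \<and> wprod \<alpha> \<theta> w' = wprod \<alpha> \<theta> w"
    then show "length w \<le> length w'"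
      using card_separating_walls_wprod[of w' p] p_alcove walls card by simp
  qed
  then show thesis
    using that chain_refl_realises[OF len w chain] chain_roots_realises[OF len chain] by blast
qed

end

theorem proposition6p7:
  fixes \<Phi> :: "'a::euclidean_space set" and \<alpha> \<omega> :: "nat \<Rightarrow> 'a" and r :: nat
    and \<theta> lam :: 'a
  assumes "root_system \<Phi>" and "irreducible_rs \<Phi>" and "is_base \<Phi> \<alpha> r"
    and "\<forall>i\<in>{1..r}. \<forall>j\<in>{1..r}. pairing (\<omega> i) (\<alpha> j) = (if i = j then 1 else 0)"
    and "highest_coroot_root \<Phi> \<alpha> r \<theta>"
    and "lam \<in> weight_lattice \<Phi>"
  shows "inj_on (hmap \<omega> r lam) (R_pairs \<Phi> \<alpha> r lam) \<and>
    (\<forall>ps. set ps = R_pairs \<Phi> \<alpha> r lam \<and>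
          sorted_wrt (\<lambda>p q. lex_less (hmap \<omega> r lam p) (hmap \<omega> r lam q)) ps \<longrightarrow>
       (\<exists>w. reduced_decomp \<alpha> \<theta> r (v_minus \<Phi> \<alpha> r \<theta> lam) w \<and>
            chain_refl \<alpha> \<theta> w = map (\<lambda>(\<beta>, k). saff \<beta> (of_int k)) ps \<and>
            chain_roots \<alpha> \<theta> w = map bmap ps))"
proof -
  interpret based_root_system \<Phi> \<alpha> \<omega> r \<theta>
    using assms(1,3,4,5) by unfold_locales
  have "\<exists>w. reduced_decomp \<alpha> \<theta> r (v_minus \<Phi> \<alpha> r \<theta> lam) w \<and>
      chain_refl \<alpha> \<theta> w = map (\<lambda>(\<beta>, k). saff \<beta> (of_int k)) ps \<and> chain_roots \<alpha> \<theta> w = map bmap ps"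
    if ps: "set ps = R_pairs \<Phi> \<alpha> r lam"
      and lex: "sorted_wrt (\<lambda>p q. lex_less (hmap \<omega> r lam p) (hmap \<omega> r lam q)) ps" for ps
  proof -
    obtain p where p: "p \<in> A" and order: "\<And>h h'. h \<in> R_pairs \<Phi> \<alpha> r lam \<Longrightarrow> h' \<in> R_pairs \<Phi> \<alpha> r lam \<Longrightarrow>
        lex_less (hmap \<omega> r lam h) (hmap \<omega> r lam h') \<Longrightarrow> crossing_time p lam h < crossing_time p lam h'"
      by (rule generic_alcove_point[where lam = lam]) blast
    have "sorted_wrt (\<lambda>h h'. crossing_time p lam h < crossing_time p lam h') ps"
      by (rule sorted_wrt_mono_rel[OF _ lex]) (use order ps in auto)
    then interpret alcove_walk \<Phi> \<alpha> \<omega> r \<theta> lam p ps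
      using assms(6) p ps by unfold_locales
    obtain w where "reduced_decomp \<alpha> \<theta> r (v_minus \<Phi> \<alpha> r \<theta> lam) w"
      "chain_refl \<alpha> \<theta> w = map (\<lambda>(\<beta>, k). saff \<beta> (of_int k)) ps" "chain_roots \<alpha> \<theta> w = map bmap ps"
      by (rule lambda_chain)
    then show ?thesis
      by blast
  qed
  then show ?thesis
    using hmap_inj by blast
qed

end
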